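(* Let $0<T\le\infty$, $\Delta=(0,T]$, let $\zeta_1,\zeta_2,\dots$ be i.i.d. non-negative random variables with distribution $G\in\mathcal S_\Delta$, $S_n=\zeta_1+\cdots+\zeta_n$, and for $x\ge0$ let $\eta(x)=\min\{n\ge1:S_n>x\}$ and $\chi(x)=S_{\eta(x)}-x$. Let $\tau$ be a non-negative integer-valued random variable independent of $\{\zeta_n\}$ with $\mathbf E(1+\delta)^\tau<\infty$ for some $\delta>0$. Then $$\mathbf P(\chi(x)\in y+\Delta,\ \eta(x)\le\tau)\sim\mathbf E\tau\cdot G(x+y+\Delta)\quad\text{as }\min(x,y)\to\infty.$$
   Context: $x+\Delta=(x,x+T]$. $G\in\mathcal L_\Delta$ means $G(x+\Delta)>0$ for all large $x$ and $G(x+t+\Delta)/G(x+\Delta)\to1$ as $x\to\infty$ uniformly in $t\in[0,1]$. A distribution $G$ on $[0,\infty)$ with unbounded support is in $\mathcal S_\Delta$ if $G\in\mathcal L_\Delta$ and $(G*G)(x+\Delta)\sim2G(x+\Delta)$ as $x\to\infty$. $a\sim b$ means $a/b\to1$. *)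

theory Defs
  imports "HOL-Probability.Probability"
begin

definition shift_int :: "real \<Rightarrow> ereal \<Rightarrow> real set" where
  "shift_int x T = {r. x < r \<and> ereal r \<le> ereal x + T}"

definition L_Delta :: "ereal \<Rightarrow> real measure \<Rightarrow> bool" where
  "L_Delta T G \<longleftrightarrow>
     eventually (\<lambda>x. measure G (shift_int x T) > 0) at_top \<and>
     (\<forall>e>0. eventually (\<lambda>x. \<forall>t\<in>{0..1}.
        \<bar>measure G (shift_int (x + t) T) / measure G (shift_int x T) - 1\<bar> < e) at_top)"

definition S_Delta :: "ereal \<Rightarrow> real measure \<Rightarrow> bool" where
  "S_Delta T G \<longleftrightarrow>
     prob_space G \<and> sets G = sets borel \<and> measure G {..<0} = 0 \<and>
     (\<forall>x. measure G {x<..} > 0) \<and>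
     L_Delta T G \<and>
     ((\<lambda>x. measure (G \<star> G) (shift_int x T) / measure G (shift_int x T)) \<longlongrightarrow> 2) at_top"

text \<open>Partial sums S_n = zeta_1 + ... + zeta_n (zeta_1 is \<open>\<zeta> 0\<close>).\<close>
definition psum :: "(nat \<Rightarrow> 'a \<Rightarrow> real) \<Rightarrow> nat \<Rightarrow> 'a \<Rightarrow> real" where
  "psum \<zeta> n \<omega> = (\<Sum>i<n. \<zeta> i \<omega>)"

definition first_passage :: "(nat \<Rightarrow> 'a \<Rightarrow> real) \<Rightarrow> real \<Rightarrow> 'a \<Rightarrow> nat" where
  "first_passage \<zeta> x \<omega> = (LEAST n. 1 \<le> n \<and> x < psum \<zeta> n \<omega>)"

definition overshoot :: "(nat \<Rightarrow> 'a \<Rightarrow> real) \<Rightarrow> real \<Rightarrow> 'a \<Rightarrow> real" where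
  "overshoot \<zeta> x \<omega> = psum \<zeta> (first_passage \<zeta> x \<omega>) \<omega> - x"

end

theory Submission
  imports Defs
begin

text \<open>
  Splitting at the step \<open>m + 1 = \<eta>(x)\<close> at which \<open>x\<close> is first passed and using that \<open>\<tau>\<close> is
  independent of the walk,
  \<open>P(\<chi>(x) \<in> y + \<Delta>, \<eta>(x) \<le> \<tau>) = \<Sum>\<^sub>m P(\<tau> > m) P(S\<^sub>m \<le> x, S\<^sub>m + \<zeta>\<^sub>m\<^sub>+\<^sub>1 \<in> x + y + \<Delta>)\<close>.
  For fixed \<open>m\<close> the \<open>m\<close>-th probability is asymptotically \<open>G(x + y + \<Delta>)\<close>: \<open>S\<^sub>m\<close> is tight,
  \<open>G\<close> is \<open>\<Delta>\<close>-long-tailed, and since \<open>G \<in> \<S>\<^sub>\<Delta>\<close> it is unlikely that both \<open>S\<^sub>m\<close> and the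
  jump are large. Kesten's bound \<open>P(S\<^sub>m \<in> w + \<Delta>) \<le> K (1 + \<epsilon>)\<^sup>m G(w + \<Delta>)\<close> together with
  \<open>E(1 + \<delta>)\<^sup>\<tau> < \<infinity>\<close> dominates the series, so by Tannery's theorem the ratio tends to
  \<open>\<Sum>\<^sub>m P(\<tau> > m) = E \<tau>\<close>.
\<close>

lemma shift_int_borel [measurable]: "shift_int x T \<in> sets borel"
proof (cases T)
  case (real t)
  then have "shift_int x T = {x<..x+t}" by (auto simp: shift_int_def)
  then show ?thesis by simp
next
  case PInf
  then have "shift_int x T = {x<..}" by (auto simp: shift_int_def)
  then show ?thesis by simp
next
  case MInf
  then have "shift_int x T = {}" by (auto simp: shift_int_def)
  then show ?thesis by simp
qed

lemma add_mem_shift_int_iff: "r + s \<in> shift_int w T \<longleftrightarrow> r \<in> shift_int (w - s) T"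
  by (cases T) (auto simp: shift_int_def)

lemma add_mem_shift_int_iff': "s + r \<in> shift_int w T \<longleftrightarrow> r \<in> shift_int (w - s) T"
  by (cases T) (auto simp: shift_int_def)

lemma diff_mem_shift_int_iff: "r - s \<in> shift_int w T \<longleftrightarrow> r \<in> shift_int (s + w) T"
  by (cases T) (auto simp: shift_int_def algebra_simps)

lemma less_of_mem_shift_int: "r \<in> shift_int w T \<Longrightarrow> w < r"
  by (simp add: shift_int_def)

lemma shift_int_Int_greaterThan: "shift_int a T \<inter> {b<..} \<subseteq> shift_int (max a b) T"
  by (cases T) (auto simp: shift_int_def max_def)

lemma Collect_in_sets_pair_borel:
  fixes P :: "'a::topological_space \<times> 'b::topological_space \<Rightarrow> bool"
  shows "Measurable.pred (borel \<Otimes>\<^sub>M borel) P \<Longrightarrow> {p. P p} \<in> sets (borel \<Otimes>\<^sub>M borel)"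
  unfolding pred_def by (simp add: space_pair_measure)

lemma eventually_prod_at_top_at_topI:
  fixes X :: "'a::linorder" and Y :: "'b::linorder"
  assumes "\<And>x y. X \<le> x \<Longrightarrow> Y \<le> y \<Longrightarrow> P (x, y)"
  shows "eventually P (at_top \<times>\<^sub>F at_top)"
proof -
  have "eventually (\<lambda>p. X \<le> fst p \<and> Y \<le> snd p) (at_top \<times>\<^sub>F at_top)"
    by (rule eventually_prodI) (auto intro: eventually_ge_at_top)
  then show ?thesis by eventually_elim (metis assms prod.collapse)
qed

lemma eventually_at_top_add_const:
  fixes c :: real
  assumes "eventually P at_top"
  shows "eventually (\<lambda>x. P (x + c)) at_top"
proof -
  obtain N where "\<And>x. N \<le> x \<Longrightarrow> P x"
    using assms by (auto simp: eventually_at_top_linorder)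
  then show ?thesis
    unfolding eventually_at_top_linorder by (intro exI[of _ "N - c"]) auto
qed

lemma sets_pair_real_distribution:
  assumes "real_distribution F" "real_distribution H"
  shows "sets (F \<Otimes>\<^sub>M H) = sets (borel \<Otimes>\<^sub>M borel)"
  using assms by (intro sets_pair_measure_cong) (simp_all add: real_distribution.events_eq_borel)

lemma emeasure_pair_real_distribution_alt:
  assumes "real_distribution F" "real_distribution H" "E \<in> sets (borel \<Otimes>\<^sub>M borel)"
  shows "emeasure (F \<Otimes>\<^sub>M H) E = (\<integral>\<^sup>+s. emeasure H {t. (s, t) \<in> E} \<partial>F)"
proof -
  interpret F: real_distribution F by fact
  interpret H: real_distribution H by fact
  have "E \<in> sets (F \<Otimes>\<^sub>M H)" using assms sets_pair_real_distribution by blast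
  from H.emeasure_pair_measure_alt[OF this] show ?thesis by (simp add: vimage_def)
qed

lemma emeasure_pair_real_distribution_alt2:
  assumes "real_distribution F" "real_distribution H" "E \<in> sets (borel \<Otimes>\<^sub>M borel)"
  shows "emeasure (F \<Otimes>\<^sub>M H) E = (\<integral>\<^sup>+t. emeasure F {s. (s, t) \<in> E} \<partial>H)"
proof -
  interpret F: real_distribution F by fact
  interpret H: real_distribution H by fact
  interpret pair_sigma_finite F H ..
  have "E \<in> sets (F \<Otimes>\<^sub>M H)" using assms sets_pair_real_distribution by blast
  from emeasure_pair_measure_alt2[OF this] show ?thesis by (simp add: vimage_def)
qed

lemma emeasure_convolution_eq_pair:
  assumes "real_distribution F" "real_distribution H" "A \<in> sets borel"
  shows "emeasure (F \<star> H) A = emeasure (F \<Otimes>\<^sub>M H) {p. fst p + snd p \<in> A}"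
proof -
  interpret F: real_distribution F by fact
  interpret H: real_distribution H by fact
  have "(\<lambda>(x, y). x + y) \<in> F \<Otimes>\<^sub>M H \<rightarrow>\<^sub>M (borel :: real measure)"
    by measurable
  from emeasure_distr[OF this assms(3)] show ?thesis
    unfolding convolution_def by (simp add: space_pair_measure vimage_def case_prod_beta)
qed

lemma (in real_distribution) tendsto_measure_greaterThan_at_top:
  "((\<lambda>B. measure M {B<..}) \<longlongrightarrow> 0) at_top"
proof -
  have "measure M {B<..} = 1 - cdf M B" for B
    using prob_compl[of "{..B}"] by (simp add: cdf_def Compl_eq_Diff_UNIV[symmetric])
  then show ?thesis
    using tendsto_diff[OF tendsto_const cdf_lim_at_top_prob, of 1] by simp
qed

lemma (in real_distribution) measure_atLeastAtMost_eq:
  assumes "AE s in M. 0 \<le> s" "0 \<le> B"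
  shows "measure M {0..B} = 1 - measure M {B<..}"
proof -
  have "measure M {0..B} = measure M {..B}"
    using assms(1) by (intro measure_eq_AE) auto
  also have "\<dots> = 1 - measure M {B<..}"
    using prob_compl[of "{B<..}"] by (simp add: Compl_eq_Diff_UNIV[symmetric])
  finally show ?thesis .
qed

lemma (in prob_space) prob_less_mult_power_le:
  fixes \<tau> :: "'a \<Rightarrow> nat" and q :: real
  assumes [measurable]: "\<tau> \<in> measurable M (count_space UNIV)"
    and "1 \<le> q" and "integrable M (\<lambda>\<omega>. q ^ \<tau> \<omega>)"
  shows "prob {\<omega> \<in> space M. m < \<tau> \<omega>} * q ^ Suc m \<le> expectation (\<lambda>\<omega>. q ^ \<tau> \<omega>)"
proof -
  let ?A = "{\<omega> \<in> space M. m < \<tau> \<omega>}"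
  have "prob ?A * q ^ Suc m = expectation (\<lambda>\<omega>. q ^ Suc m * indicator ?A \<omega>)"
    by (simp add: mult.commute)
  also have "\<dots> \<le> expectation (\<lambda>\<omega>. q ^ \<tau> \<omega>)"
  proof (rule integral_mono)
    show "integrable M (\<lambda>\<omega>. q ^ Suc m * indicator ?A \<omega>)"
      by (intro integrable_mult_right integrable_real_indicator) (auto simp: emeasure_eq_measure)
    fix \<omega> assume "\<omega> \<in> space M"
    show "q ^ Suc m * indicator ?A \<omega> \<le> q ^ \<tau> \<omega>"
      using assms(2) power_increasing[of "Suc m" "\<tau> \<omega>" q] by (auto simp: indicator_def)
  qed fact
  finally show ?thesis .
qed

lemma (in prob_space) summable_prob_less_mult_power:
  fixes \<tau> :: "'a \<Rightarrow> nat" and q r :: real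
  assumes "\<tau> \<in> measurable M (count_space UNIV)"
    and "1 \<le> r" "integrable M (\<lambda>\<omega>. r ^ \<tau> \<omega>)" "0 \<le> q" "q < r"
  shows "summable (\<lambda>m. prob {\<omega> \<in> space M. m < \<tau> \<omega>} * q ^ Suc m)"
proof (rule summable_comparison_test)
  let ?C = "expectation (\<lambda>\<omega>. r ^ \<tau> \<omega>)"
  show "\<exists>N. \<forall>m\<ge>N. norm (prob {\<omega> \<in> space M. m < \<tau> \<omega>} * q ^ Suc m) \<le> ?C * (q / r) ^ Suc m"
  proof (intro exI allI impI)
    fix m :: nat
    have "prob {\<omega> \<in> space M. m < \<tau> \<omega>} * q ^ Suc m
        = (prob {\<omega> \<in> space M. m < \<tau> \<omega>} * r ^ Suc m) * (q / r) ^ Suc m"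
      using assms(2) by (simp add: power_divide)
    also have "\<dots> \<le> ?C * (q / r) ^ Suc m"
      using prob_less_mult_power_le[OF assms(1-3)] assms(2,4) by (intro mult_right_mono) auto
    finally show "norm (prob {\<omega> \<in> space M. m < \<tau> \<omega>} * q ^ Suc m) \<le> ?C * (q / r) ^ Suc m"
      using assms(4) by simp
  qed
  show "summable (\<lambda>m. ?C * (q / r) ^ Suc m)"
    using assms(2,4,5) by (intro summable_mult) (simp add: summable_Suc_iff)
qed

lemma (in prob_space) expectation_nat_eq_suminf_prob_less:
  fixes \<tau> :: "'a \<Rightarrow> nat"
  assumes [measurable]: "\<tau> \<in> measurable M (count_space UNIV)"
    and summable: "summable (\<lambda>m. prob {\<omega> \<in> space M. m < \<tau> \<omega>})"
  shows "expectation (\<lambda>\<omega>. real (\<tau> \<omega>)) = (\<Sum>m. prob {\<omega> \<in> space M. m < \<tau> \<omega>})"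
proof -
  let ?f = "\<lambda>m \<omega>. indicator {\<omega> \<in> space M. m < \<tau> \<omega>} \<omega> :: real"
  have integrable: "integrable M (?f m)" for m
    by (intro integrable_real_indicator) (auto simp: emeasure_eq_measure)
  have "(\<Sum>m. ?f m \<omega>) = real (\<tau> \<omega>)" if "\<omega> \<in> space M" for \<omega>
  proof -
    have "(\<Sum>m. ?f m \<omega>) = (\<Sum>m<\<tau> \<omega>. ?f m \<omega>)"
      by (rule suminf_finite) (use that in auto)
    also have "\<dots> = (\<Sum>m<\<tau> \<omega>. 1)" using that by (intro sum.cong) auto
    finally show ?thesis by simp
  qed
  then have "expectation (\<lambda>\<omega>. real (\<tau> \<omega>)) = expectation (\<lambda>\<omega>. \<Sum>m. ?f m \<omega>)"
    by (intro Bochner_Integration.integral_cong) auto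
  also have "\<dots> = (\<Sum>m. expectation (?f m))"
  proof (rule integral_suminf[OF integrable])
    show "AE \<omega> in M. summable (\<lambda>m. norm (?f m \<omega>))"
    proof (rule AE_I2)
      fix \<omega> assume "\<omega> \<in> space M"
      show "summable (\<lambda>m. norm (?f m \<omega>))"
        by (rule summable_finite[of "{..<\<tau> \<omega>}"]) auto
    qed
    show "summable (\<lambda>m. \<integral>\<omega>. norm (?f m \<omega>) \<partial>M)" using summable by simp
  qed
  finally show ?thesis by simp
qed

section \<open>Distributions in \<open>\<S>\<^sub>\<Delta>\<close>\<close>

locale Delta_subexponential =
  fixes T :: ereal and G :: "real measure"
  assumes S_Delta: "S_Delta T G"
begin

lemma real_distribution_G: "real_distribution G"
  using S_Delta by (simp add: S_Delta_def real_distribution_def real_distribution_axioms_def)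

sublocale G: real_distribution G
  by (rule real_distribution_G)

abbreviation SI :: "real \<Rightarrow> real set" where "SI w \<equiv> shift_int w T"

definition g :: "real \<Rightarrow> real" where "g w = measure G (SI w)"

lemma g_nonneg: "0 \<le> g w"
  by (simp add: g_def)

lemma emeasure_shift_int: "emeasure G (SI w) = ennreal (g w)"
  by (simp add: g_def G.emeasure_eq_measure)

lemma AE_G_nonneg: "AE t in G. 0 \<le> t"
proof -
  have "{..<0::real} \<in> null_sets G"
    using S_Delta by (simp add: S_Delta_def G.emeasure_eq_measure null_sets_def)
  then show ?thesis
    by (rule AE_I') auto
qed

lemma g_measurable [measurable]: "g \<in> borel_measurable borel"
proof -
  have [measurable]: "cdf G \<in> borel_measurable borel"
    by (rule borel_measurable_mono) (simp add: mono_def G.cdf_nondecreasing)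
  show ?thesis
  proof (cases T)
    case (real t)
    show ?thesis
    proof (cases "0 \<le> t")
      case True
      have "SI w = {..w + t} - {..w}" for w
        using real by (auto simp: shift_int_def)
      then have "g = (\<lambda>w. cdf G (w + t) - cdf G w)"
        using True by (auto simp: g_def cdf_def G.finite_measure_Diff)
      then show ?thesis by simp
    next
      case False
      then have "SI w = {}" for w
        using real by (auto simp: shift_int_def)
      then have "g = (\<lambda>_. 0)" by (simp add: g_def fun_eq_iff)
      then show ?thesis by simp
    qed
  next
    case PInf
    have "SI w = UNIV - {..w}" for w
      using PInf by (auto simp: shift_int_def)
    then have "g w = 1 - cdf G w" for w
      using G.prob_compl[of "{..w}"] by (simp add: g_def cdf_def)
    then have "g = (\<lambda>w. 1 - cdf G w)" by auto
    then show ?thesis by simp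
  next
    case MInf
    then have "SI w = {}" for w
      by (auto simp: shift_int_def)
    then have "g = (\<lambda>_. 0)" by (simp add: g_def fun_eq_iff)
    then show ?thesis by simp
  qed
qed

lemma eventually_g_pos: "eventually (\<lambda>x. 0 < g x) at_top"
  using S_Delta by (simp add: S_Delta_def L_Delta_def g_def)

lemma eventually_g_step:
  assumes "0 < e"
  shows "eventually (\<lambda>x. \<forall>t\<in>{0..1}. \<bar>g (x + t) - g x\<bar> \<le> e * g x) at_top"
proof -
  have "eventually (\<lambda>x. \<forall>t\<in>{0..1}. \<bar>g (x + t) / g x - 1\<bar> < e) at_top"
    using S_Delta assms by (simp add: S_Delta_def L_Delta_def g_def)
  with eventually_g_pos show ?thesis
  proof eventually_elim
    case (elim x)
    show ?case
    proof
      fix t :: real assume "t \<in> {0..1}"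
      with elim have "\<bar>(g (x + t) - g x) / g x\<bar> < e" by (simp add: diff_divide_distrib)
      then show "\<bar>g (x + t) - g x\<bar> \<le> e * g x" using elim by (simp add: abs_divide field_simps)
    qed
  qed
qed

lemma eventually_g_shift:
  assumes "0 < e"
  shows "eventually (\<lambda>x. \<forall>t\<in>{0..real k}. \<bar>g (x + t) - g x\<bar> \<le> e * g x) at_top"
  using assms
proof (induction k arbitrary: e)
  case 0
  then show ?case by (simp add: g_nonneg)
next
  case (Suc k)
  define e' where "e' = min e 1 / 3"
  have e': "0 < e'" "e' \<le> 1/3" "3 * e' \<le> e" using Suc.prems by (auto simp: e'_def)
  have "eventually (\<lambda>x. \<forall>t\<in>{0..real k}. \<bar>g (x + 1 + t) - g (x + 1)\<bar> \<le> e' * g (x + 1)) at_top"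
    using eventually_at_top_add_const[OF Suc.IH[OF e'(1)], of 1] by simp
  with eventually_g_step[OF e'(1)] show ?case
  proof eventually_elim
    case (elim x)
    show ?case
    proof
      fix t assume t: "t \<in> {0..real (Suc k)}"
      show "\<bar>g (x + t) - g x\<bar> \<le> e * g x"
      proof (cases "t \<le> 1")
        case True
        then have "\<bar>g (x + t) - g x\<bar> \<le> e' * g x" using elim t by auto
        also have "\<dots> \<le> e * g x" using e' g_nonneg[of x] by (intro mult_right_mono) auto
        finally show ?thesis .
      next
        case False
        then have "t - 1 \<in> {0..real k}" using t by auto
        from bspec[OF elim(2) this] have a: "\<bar>g (x + t) - g (x + 1)\<bar> \<le> e' * g (x + 1)"
          by simp
        have b: "\<bar>g (x + 1) - g x\<bar> \<le> e' * g x" using elim(1) by auto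
        then have "g (x + 1) \<le> (1 + e') * g x" by (simp add: algebra_simps)
        then have "e' * g (x + 1) \<le> e' * ((1 + e') * g x)" using e' by (intro mult_left_mono) auto
        with a b have "\<bar>g (x + t) - g x\<bar> \<le> e' * (2 + e') * g x"
          by (simp add: algebra_simps)
        also have "\<dots> \<le> e * g x"
        proof (rule mult_right_mono)
          have "e' * e' \<le> e' * 1" using e' by (intro mult_left_mono) auto
          then show "e' * (2 + e') \<le> e" using e' unfolding distrib_left by linarith
        qed (rule g_nonneg)
        finally show ?thesis .
      qed
    qed
  qed
qed
lemma eventually_g_ratio:
  assumes "0 < e"
  shows "eventually (\<lambda>z. \<forall>s\<in>{-A..A}. \<bar>g (z - s) - g z\<bar> \<le> e * g z) at_top"
proof -
  define k where "k = nat \<lceil>A\<rceil>"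
  have kA: "A \<le> real k" unfolding k_def by linarith
  define e' where "e' = min e 1 / 4"
  have e': "0 < e'" "e' \<le> 1/4" "4 * e' \<le> e" using assms by (auto simp: e'_def)
  have up: "eventually (\<lambda>x. \<forall>t\<in>{0..real k}. \<bar>g (x + t) - g x\<bar> \<le> e' * g x) at_top"
    by (rule eventually_g_shift[OF e'(1)])
  have down: "eventually (\<lambda>x. \<forall>t\<in>{0..real k}.
      \<bar>g (x - real k + t) - g (x - real k)\<bar> \<le> e' * g (x - real k)) at_top"
    using eventually_at_top_add_const[OF up, of "- real k"] by simp
  from up down show ?thesis
  proof eventually_elim
    case (elim z)
    show ?case
    proof
      fix s assume s: "s \<in> {-A..A}"
      show "\<bar>g (z - s) - g z\<bar> \<le> e * g z"
      proof (cases "0 \<le> s")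
        case False
        then have "- s \<in> {0..real k}" using s kA by auto
        then have "\<bar>g (z + - s) - g z\<bar> \<le> e' * g z" using elim(1) by blast
        also have "\<dots> \<le> e * g z" using e' g_nonneg[of z] by (intro mult_right_mono) auto
        finally show ?thesis by simp
      next
        case True
        define w where "w = z - real k"
        have "real k - s \<in> {0..real k}" using s True kA by auto
        with elim(2) have "\<bar>g (w + (real k - s)) - g w\<bar> \<le> e' * g w"
          unfolding w_def by blast
        then have 1: "\<bar>g (z - s) - g w\<bar> \<le> e' * g w"
          by (simp add: w_def)
        have "\<bar>g (w + real k) - g w\<bar> \<le> e' * g w"
          using bspec[OF elim(2), of "real k"] unfolding w_def by simp
        then have 2: "\<bar>g z - g w\<bar> \<le> e' * g w"
          by (simp add: w_def)
        have "e' * g w \<le> 1/4 * g w" using e' g_nonneg[of w] by (intro mult_right_mono) auto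
        then have gw: "g w \<le> 4/3 * g z" using 2 by linarith
        have "\<bar>g (z - s) - g z\<bar> \<le> 2 * e' * g w" using 1 2 by simp
        also have "\<dots> \<le> 2 * e' * (4/3 * g z)" using gw e' by (intro mult_left_mono) auto
        also have "\<dots> = (8/3 * e') * g z" by simp
        also have "\<dots> \<le> e * g z" using e' g_nonneg[of z] by (intro mult_right_mono) auto
        finally show ?thesis .
      qed
    qed
  qed
qed

lemma g_lower_chain:
  obtains X where "\<And>x. X \<le> x \<Longrightarrow> 0 < g x"
    and "\<And>x n t. X \<le> x \<Longrightarrow> t \<in> {0..real n} \<Longrightarrow> g x / 2 ^ n \<le> g (x + t)"
proof -
  have "eventually (\<lambda>x. 0 < g x \<and> (\<forall>t\<in>{0..1}. \<bar>g (x + t) - g x\<bar> \<le> 1/2 * g x)) at_top"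
    by (intro eventually_conj eventually_g_pos eventually_g_step) simp
  then obtain X where X: "\<And>x. X \<le> x \<Longrightarrow> 0 < g x \<and> (\<forall>t\<in>{0..1}. \<bar>g (x + t) - g x\<bar> \<le> 1/2 * g x)"
    by (auto simp: eventually_at_top_linorder)
  have chain: "g x / 2 ^ n \<le> g (x + t)" if "X \<le> x" "t \<in> {0..real n}" for n x t
    using that
  proof (induction n arbitrary: x t)
    case 0
    then show ?case by simp
  next
    case (Suc n)
    have half: "g x / 2 \<le> g (x + s)" if "s \<in> {0..1}" for s
    proof -
      have "\<bar>g (x + s) - g x\<bar> \<le> 1/2 * g x" using X[OF Suc.prems(1)] that by blast
      then show ?thesis by linarith
    qed
    show ?case
    proof (cases "t \<le> 1")
      case True
      have "g x / 2 ^ Suc n \<le> g x / 2" using X[OF Suc.prems(1)] by (intro divide_left_mono) auto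
      also have "\<dots> \<le> g (x + t)" using half True Suc.prems(2) by auto
      finally show ?thesis .
    next
      case False
      have "g x / 2 ^ Suc n = (g x / 2) / 2 ^ n" by simp
      also have "\<dots> \<le> g (x + 1) / 2 ^ n" using half[of 1] by (intro divide_right_mono) auto
      also have "\<dots> \<le> g (x + 1 + (t - 1))" using Suc.IH[of "x + 1" "t - 1"] Suc.prems False by auto
      finally show ?thesis by simp
    qed
  qed
  show ?thesis
  proof (rule that)
    show "0 < g x" if "X \<le> x" for x using X[OF that] by blast
  qed (rule chain)
qed

lemma eventually_g_bounded_below:
  "eventually (\<lambda>A. \<forall>W. \<exists>c>0. \<forall>w\<in>{A..W}. c \<le> g w) at_top"
proof -
  obtain X where pos: "\<And>x. X \<le> x \<Longrightarrow> 0 < g x"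
    and chain: "\<And>x n t. X \<le> x \<Longrightarrow> t \<in> {0..real n} \<Longrightarrow> g x / 2 ^ n \<le> g (x + t)"
    using g_lower_chain by blast
  have "\<exists>c>0. \<forall>w\<in>{A..W}. c \<le> g w" if A: "X \<le> A" for A W
  proof (intro exI conjI ballI)
    define n where "n = nat \<lceil>W - A\<rceil>"
    show "0 < g A / 2 ^ n" using pos[OF A] by simp
    fix w assume w: "w \<in> {A..W}"
    have "W - A \<le> real n" unfolding n_def by (rule real_nat_ceiling_ge)
    then show "g A / 2 ^ n \<le> g w" using chain[of A "w - A" n] A w by auto
  qed
  then show ?thesis
    unfolding eventually_at_top_linorder by blast
qed

text \<open>The part of \<open>(F * G)(z + \<Delta>)\<close> contributed by a first summand in \<open>I\<close>.\<close>
definition conv_part :: "real measure \<Rightarrow> real set \<Rightarrow> real \<Rightarrow> ennreal" where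
  "conv_part F I z = (\<integral>\<^sup>+s. indicator I s * ennreal (g (z - s)) \<partial>F)"

lemma emeasure_pair_sum_fst:
  assumes "real_distribution F" "I \<in> sets borel"
  shows "emeasure (F \<Otimes>\<^sub>M G) {p. fst p \<in> I \<and> fst p + snd p \<in> SI z} = conv_part F I z"
proof -
  have [measurable]: "I \<in> sets borel" by fact
  have "{p. fst p \<in> I \<and> fst p + snd p \<in> SI z} \<in> sets (borel \<Otimes>\<^sub>M borel)"
    by (intro Collect_in_sets_pair_borel) measurable
  then have "emeasure (F \<Otimes>\<^sub>M G) {p. fst p \<in> I \<and> fst p + snd p \<in> SI z}
      = (\<integral>\<^sup>+s. emeasure G {t. s \<in> I \<and> s + t \<in> SI z} \<partial>F)"
    by (simp add: emeasure_pair_real_distribution_alt[OF assms(1) real_distribution_G])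
  also have "\<dots> = conv_part F I z"
    unfolding conv_part_def by (intro nn_integral_cong)
      (simp add: add_mem_shift_int_iff' emeasure_shift_int split: split_indicator)
  finally show ?thesis .
qed

lemma emeasure_pair_sum_snd:
  assumes "real_distribution F" "I \<in> sets borel"
  shows "emeasure (F \<Otimes>\<^sub>M G) {p. snd p \<in> I \<and> fst p + snd p \<in> SI z}
    = (\<integral>\<^sup>+t. indicator I t * emeasure F (SI (z - t)) \<partial>G)"
proof -
  have [measurable]: "I \<in> sets borel" by fact
  have "{p. snd p \<in> I \<and> fst p + snd p \<in> SI z} \<in> sets (borel \<Otimes>\<^sub>M borel)"
    by (intro Collect_in_sets_pair_borel) measurable
  then have "emeasure (F \<Otimes>\<^sub>M G) {p. snd p \<in> I \<and> fst p + snd p \<in> SI z}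
      = (\<integral>\<^sup>+t. emeasure F {s. t \<in> I \<and> s + t \<in> SI z} \<partial>G)"
    by (simp add: emeasure_pair_real_distribution_alt2[OF assms(1) real_distribution_G])
  also have "\<dots> = (\<integral>\<^sup>+t. indicator I t * emeasure F (SI (z - t)) \<partial>G)"
    by (intro nn_integral_cong) (simp add: add_mem_shift_int_iff split: split_indicator)
  finally show ?thesis .
qed

lemma conv_part_eq_emeasure_pair:
  "I \<in> sets borel \<Longrightarrow> conv_part G I z = emeasure (G \<Otimes>\<^sub>M G) {p. snd p \<in> I \<and> fst p + snd p \<in> SI z}"
  by (simp add: conv_part_def emeasure_pair_sum_snd[OF real_distribution_G] emeasure_shift_int)

lemma conv_part_le:
  assumes "real_distribution F" "AE s in F. 0 \<le> s" "\<forall>s\<in>{0..A}. g (z - s) \<le> c"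
  shows "conv_part F {..A} z \<le> ennreal c"
proof -
  interpret F: real_distribution F by fact
  have "AE s in F. indicator {..A} s * ennreal (g (z - s)) \<le> ennreal c"
    using assms(2) by eventually_elim (auto simp: indicator_def assms(3) intro!: ennreal_leI)
  then have "conv_part F {..A} z \<le> (\<integral>\<^sup>+s. ennreal c \<partial>F)"
    unfolding conv_part_def by (rule nn_integral_mono_AE)
  then show ?thesis by (simp add: F.emeasure_space_1[unfolded F.space_eq_univ])
qed

lemma conv_part_ge:
  assumes "real_distribution F" "I \<in> sets borel" "I \<subseteq> J" "\<forall>s\<in>I. c \<le> g (z - s)"
  shows "ennreal c * emeasure F I \<le> conv_part F J z"
proof -
  interpret F: real_distribution F by fact
  have "ennreal c * emeasure F I = (\<integral>\<^sup>+s. ennreal c * indicator I s \<partial>F)"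
    using assms(2) by (intro nn_integral_cmult_indicator[symmetric]) simp
  also have "\<dots> \<le> conv_part F J z"
    unfolding conv_part_def using assms(3,4)
    by (intro nn_integral_mono) (auto simp: ennreal_leI split: split_indicator)
  finally show ?thesis .
qed

lemma emeasure_convolution_shift_int:
  "real_distribution F \<Longrightarrow> emeasure (F \<star> G) (SI z) = emeasure (F \<Otimes>\<^sub>M G) {p. fst p + snd p \<in> SI z}"
  by (rule emeasure_convolution_eq_pair[OF _ real_distribution_G]) simp_all

lemma conv_part_split:
  assumes "2 * A \<le> z"
  shows "2 * conv_part G {..A} z + conv_part G {A<..z - A} z \<le> emeasure (G \<star> G) (SI z)"
proof -
  define P1 where "P1 = {p :: real \<times> real. fst p \<in> {..A} \<and> fst p + snd p \<in> SI z}"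
  define P2 where "P2 = {p :: real \<times> real. snd p \<in> {..A} \<and> fst p + snd p \<in> SI z}"
  define Q where "Q = {p :: real \<times> real. snd p \<in> {A<..z - A} \<and> fst p + snd p \<in> SI z}"
  have sets_GG: "sets (G \<Otimes>\<^sub>M G) = sets (borel \<Otimes>\<^sub>M borel)"
    by (rule sets_pair_real_distribution[OF real_distribution_G real_distribution_G])
  have sets: "P1 \<in> sets (G \<Otimes>\<^sub>M G)" "P2 \<in> sets (G \<Otimes>\<^sub>M G)" "Q \<in> sets (G \<Otimes>\<^sub>M G)"
    "{p. fst p + snd p \<in> SI z} \<in> sets (G \<Otimes>\<^sub>M G)"
    unfolding sets_GG P1_def P2_def Q_def by (intro Collect_in_sets_pair_borel; measurable)+
  have sum_gt: "z < fst p + snd p" if "p \<in> P1 \<union> P2 \<union> Q" for p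
    using that less_of_mem_shift_int unfolding P1_def P2_def Q_def by blast
  have "P1 \<inter> P2 = {}"
  proof -
    have False if "p \<in> P1" "p \<in> P2" for p
      using that sum_gt[of p] assms unfolding P1_def P2_def by auto
    then show ?thesis by blast
  qed
  then have P12: "emeasure (G \<Otimes>\<^sub>M G) P1 + emeasure (G \<Otimes>\<^sub>M G) P2 = emeasure (G \<Otimes>\<^sub>M G) (P1 \<union> P2)"
    using sets by (intro plus_emeasure) auto
  have "(P1 \<union> P2) \<inter> Q = {}"
  proof -
    have False if "p \<in> P1 \<union> P2" "p \<in> Q" for p
      using that sum_gt[of p] unfolding P1_def P2_def Q_def by auto
    then show ?thesis by blast
  qed
  then have P12Q: "emeasure (G \<Otimes>\<^sub>M G) (P1 \<union> P2) + emeasure (G \<Otimes>\<^sub>M G) Q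
      = emeasure (G \<Otimes>\<^sub>M G) (P1 \<union> P2 \<union> Q)"
    using sets by (intro plus_emeasure) auto
  have "conv_part G {..A} z = emeasure (G \<Otimes>\<^sub>M G) P1"
    unfolding P1_def by (rule emeasure_pair_sum_fst[OF real_distribution_G, symmetric]) simp
  moreover have "conv_part G {..A} z = emeasure (G \<Otimes>\<^sub>M G) P2"
    unfolding P2_def by (rule conv_part_eq_emeasure_pair) simp
  moreover have "conv_part G {A<..z - A} z = emeasure (G \<Otimes>\<^sub>M G) Q"
    unfolding Q_def by (rule conv_part_eq_emeasure_pair) simp
  ultimately have "2 * conv_part G {..A} z + conv_part G {A<..z - A} z
      = emeasure (G \<Otimes>\<^sub>M G) (P1 \<union> P2 \<union> Q)"
    using P12 P12Q by (metis mult_2)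
  also have "\<dots> \<le> emeasure (G \<Otimes>\<^sub>M G) {p. fst p + snd p \<in> SI z}"
    using sets(4) by (rule emeasure_mono[rotated]) (auto simp: P1_def P2_def Q_def)
  also have "\<dots> = emeasure (G \<star> G) (SI z)"
    by (rule emeasure_convolution_shift_int[OF real_distribution_G, symmetric])
  finally show ?thesis .
qed

lemma conv_part_middle_le:
  assumes "2 * A \<le> z" "0 \<le> a"
    and tails: "ennreal a \<le> conv_part G {..A} z"
    and total: "emeasure (G \<star> G) (SI z) \<le> ennreal b"
  shows "conv_part G {A<..z - A} z \<le> ennreal (b - 2 * a)"
proof -
  have "conv_part G {A<..z - A} z + ennreal (2 * a) \<le> conv_part G {A<..z - A} z + 2 * conv_part G {..A} z"
    using tails \<open>0 \<le> a\<close> by (simp add: ennreal_mult mult_left_mono)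
  also have "\<dots> \<le> ennreal b"
    using conv_part_split[OF assms(1)] total by (simp add: add.commute)
  finally have "conv_part G {A<..z - A} z \<le> ennreal b - ennreal (2 * a)"
    by (simp add: ennreal_le_minus_iff)
  also have "\<dots> = ennreal (b - 2 * a)"
    using \<open>0 \<le> a\<close> by (simp add: ennreal_minus)
  finally show ?thesis .
qed

lemma conv_part_atMost_ge:
  assumes "e \<le> 1" "0 \<le> g z" "1 - e \<le> measure G {0..A}"
    and near: "\<forall>s\<in>{0..A}. (1 - e) * g z \<le> g (z - s)"
  shows "ennreal ((1 - e)\<^sup>2 * g z) \<le> conv_part G {..A} z"
proof -
  have "(1 - e)\<^sup>2 * g z = (1 - e) * g z * (1 - e)" by (simp add: power2_eq_square)
  also have "\<dots> \<le> (1 - e) * g z * measure G {0..A}"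
    using assms(1-3) by (intro mult_left_mono) auto
  finally have "ennreal ((1 - e)\<^sup>2 * g z) \<le> ennreal ((1 - e) * g z) * emeasure G {0..A}"
    using assms(1,2) by (simp add: G.emeasure_eq_measure ennreal_mult[symmetric] ennreal_leI)
  also have "\<dots> \<le> conv_part G {..A} z"
    by (rule conv_part_ge[OF real_distribution_G _ _ near]) auto
  finally show ?thesis .
qed

text \<open>This is where \<open>G \<in> \<S>\<^sub>\<Delta>\<close> enters: both summands of size at most \<open>A\<close> already
  account for \<open>2 G(z + \<Delta>)\<close>, so two summands larger than \<open>A\<close> contribute little.\<close>
lemma eventually_conv_part_middle_le:
  assumes "0 < e"
  shows "\<exists>A\<^sub>0\<ge>0. \<forall>A\<ge>A\<^sub>0. eventually (\<lambda>z. conv_part G {A<..z - A} z \<le> ennreal (e * g z)) at_top"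
proof -
  define e' where "e' = min e 1 / 5"
  have e': "0 < e'" "e' \<le> 1/5" "5 * e' \<le> e" using assms by (auto simp: e'_def)
  have "eventually (\<lambda>A. measure G {A<..} < e') at_top"
    using G.tendsto_measure_greaterThan_at_top e'(1) by (rule order_tendstoD)
  then obtain A\<^sub>0 where A\<^sub>0: "\<And>A. A\<^sub>0 \<le> A \<Longrightarrow> measure G {A<..} < e'"
    by (auto simp: eventually_at_top_linorder)
  have "((\<lambda>x. measure (G \<star> G) (SI x) / g x) \<longlongrightarrow> 2) at_top"
    using S_Delta by (simp add: S_Delta_def g_def)
  then have conv: "eventually (\<lambda>z. measure (G \<star> G) (SI z) / g z < 2 + e') at_top"
    using e' by (intro order_tendstoD(2)) auto
  show ?thesis
  proof (intro exI[of _ "max A\<^sub>0 0"] conjI allI impI)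
    fix A assume A: "max A\<^sub>0 0 \<le> A"
    have GA: "1 - e' \<le> measure G {0..A}"
      using A\<^sub>0[of A] A G.measure_atLeastAtMost_eq[OF AE_G_nonneg, of A] by auto
    from conv eventually_g_pos eventually_g_ratio[OF e'(1), of A] eventually_ge_at_top[of "2 * A"]
    show "eventually (\<lambda>z. conv_part G {A<..z - A} z \<le> ennreal (e * g z)) at_top"
    proof eventually_elim
      case (elim z)
      let ?near = "(1 - e')\<^sup>2 * g z" and ?total = "(2 + e') * g z"
      have gz: "0 < g z" by (fact elim(2))
      have "\<forall>s\<in>{0..A}. (1 - e') * g z \<le> g (z - s)"
      proof
        fix s assume "s \<in> {0..A}"
        then have "\<bar>g (z - s) - g z\<bar> \<le> e' * g z" using elim(3) by auto
        then show "(1 - e') * g z \<le> g (z - s)" by (simp add: algebra_simps abs_le_iff)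
      qed
      with GA e' gz have near: "ennreal ?near \<le> conv_part G {..A} z"
        by (intro conv_part_atMost_ge) auto
      have "finite_measure (G \<star> G)"
        by (rule convolution_finite) (simp_all add: G.finite_measure_axioms)
      then have "emeasure (G \<star> G) (SI z) = ennreal (measure (G \<star> G) (SI z))"
        by (rule finite_measure.emeasure_eq_measure)
      also have "\<dots> \<le> ennreal ?total"
        using elim(1) gz by (intro ennreal_leI) (simp add: divide_less_eq)
      finally have middle: "conv_part G {A<..z - A} z \<le> ennreal (?total - 2 * ?near)"
        using gz by (intro conv_part_middle_le[OF elim(4) _ near]) simp_all
      have "?total - 2 * ?near = (5 * e' - 2 * e'\<^sup>2) * g z"
        by (simp add: power2_eq_square algebra_simps)
      also have "\<dots> \<le> e * g z"
      proof (rule mult_right_mono)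
        show "5 * e' - 2 * e'\<^sup>2 \<le> e" using e'(3) zero_le_power2[of e'] by linarith
      qed (use gz in simp)
      finally show ?case
        using middle by (meson ennreal_leI order_trans)
    qed
  qed simp
qed

subsection \<open>Kesten's bound\<close>

lemma emeasure_section_far_le:
  assumes "0 \<le> s" "0 \<le> A" "\<forall>r\<in>{0..A}. g (w - r) \<le> c"
  shows "emeasure G {t. w - A < t \<and> s + t \<in> SI w} \<le> ennreal c"
proof -
  have "{t. w - A < t \<and> s + t \<in> SI w} = SI (w - s) \<inter> {w - A<..}"
    by (auto simp: add_mem_shift_int_iff')
  also have "\<dots> \<subseteq> SI (max (w - s) (w - A))"
    by (rule shift_int_Int_greaterThan)
  also have "max (w - s) (w - A) = w - min s A"
    by (simp add: max_def min_def)
  finally have "emeasure G {t. w - A < t \<and> s + t \<in> SI w} \<le> emeasure G (SI (w - min s A))"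
    by (rule emeasure_mono) simp
  also have "\<dots> \<le> ennreal c"
    using assms by (simp add: emeasure_shift_int ennreal_leI)
  finally show ?thesis .
qed

lemma emeasure_pair_far_le:
  assumes "real_distribution F" "AE s in F. 0 \<le> s" "I \<in> sets borel" "0 \<le> A"
    and near: "\<forall>r\<in>{0..A}. g (z - r) \<le> c"
  shows "emeasure (F \<Otimes>\<^sub>M G) {p. fst p \<in> I \<and> z - A < snd p \<and> fst p + snd p \<in> SI z}
    \<le> ennreal c * emeasure F I"
proof -
  interpret F: real_distribution F by fact
  have [measurable]: "I \<in> sets borel" by fact
  have "{p. fst p \<in> I \<and> z - A < snd p \<and> fst p + snd p \<in> SI z} \<in> sets (borel \<Otimes>\<^sub>M borel)"
    by (intro Collect_in_sets_pair_borel) measurable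
  then have "emeasure (F \<Otimes>\<^sub>M G) {p. fst p \<in> I \<and> z - A < snd p \<and> fst p + snd p \<in> SI z}
      = (\<integral>\<^sup>+s. emeasure G {t. s \<in> I \<and> z - A < t \<and> s + t \<in> SI z} \<partial>F)"
    by (simp add: emeasure_pair_real_distribution_alt[OF assms(1) real_distribution_G])
  also have "\<dots> \<le> (\<integral>\<^sup>+s. ennreal c * indicator I s \<partial>F)"
    using assms(2)
  proof (intro nn_integral_mono_AE, eventually_elim)
    case (elim s)
    show ?case
      using emeasure_section_far_le[of s A z c] elim \<open>0 \<le> A\<close> near by (simp split: split_indicator)
  qed
  also have "\<dots> = ennreal c * emeasure F I"
    by (rule nn_integral_cmult_indicator) simp
  finally show ?thesis .
qed

lemma emeasure_pair_sum_snd_le: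
  assumes "real_distribution F" "I \<in> sets borel" "0 \<le> K"
    and bound: "\<forall>t\<in>I. emeasure F (SI (z - t)) \<le> ennreal (K * g (z - t))"
  shows "emeasure (F \<Otimes>\<^sub>M G) {p. snd p \<in> I \<and> fst p + snd p \<in> SI z} \<le> ennreal K * conv_part G I z"
proof -
  have [measurable]: "I \<in> sets borel" by fact
  have "emeasure (F \<Otimes>\<^sub>M G) {p. snd p \<in> I \<and> fst p + snd p \<in> SI z}
      = (\<integral>\<^sup>+t. indicator I t * emeasure F (SI (z - t)) \<partial>G)"
    by (rule emeasure_pair_sum_snd[OF assms(1,2)])
  also have "\<dots> \<le> (\<integral>\<^sup>+t. ennreal K * (indicator I t * ennreal (g (z - t))) \<partial>G)"
  proof (rule nn_integral_mono)
    fix t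
    show "indicator I t * emeasure F (SI (z - t)) \<le> ennreal K * (indicator I t * ennreal (g (z - t)))"
    proof (cases "t \<in> I")
      case True
      then show ?thesis using bound \<open>0 \<le> K\<close> g_nonneg by (simp add: ennreal_mult)
    qed simp
  qed
  also have "\<dots> = ennreal K * conv_part G I z"
    unfolding conv_part_def by (rule nn_integral_cmult) measurable
  finally show ?thesis .
qed

lemma conv_part_le_split:
  "conv_part G {..w - A} w \<le> conv_part G {..A} w + conv_part G {A<..w - A} w"
proof -
  have "conv_part G {..w - A} w \<le> (\<integral>\<^sup>+t. indicator {..A} t * ennreal (g (w - t))
      + indicator {A<..w - A} t * ennreal (g (w - t)) \<partial>G)"
    unfolding conv_part_def by (intro nn_integral_mono) (simp split: split_indicator)
  also have "\<dots> = conv_part G {..A} w + conv_part G {A<..w - A} w"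
    unfolding conv_part_def by (rule nn_integral_add) measurable
  finally show ?thesis .
qed

text \<open>The additive contribution \<open>1 + \<epsilon>/4\<close> of a large first summand is absorbed by the
  growth factor because \<open>B \<epsilon> \<ge> 3\<close>.\<close>
lemma emeasure_convolution_le_step:
  assumes F: "real_distribution F" "AE s in F. 0 \<le> s"
    and "0 \<le> A" "0 < \<epsilon>" "\<epsilon> \<le> 1" "3 \<le> B * \<epsilon>"
    and middle: "conv_part G {A<..w - A} w \<le> ennreal (\<epsilon> / 4 * g w)"
    and near: "\<forall>s\<in>{0..A}. g (w - s) \<le> (1 + \<epsilon> / 4) * g w"
    and bound: "\<forall>v\<ge>A. emeasure F (SI v) \<le> ennreal (B * g v)"
  shows "emeasure (F \<star> G) (SI w) \<le> ennreal (B * (1 + \<epsilon>) * g w)"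
proof -
  interpret F: real_distribution F by fact
  have "0 \<le> B" using \<open>0 < \<epsilon>\<close> \<open>3 \<le> B * \<epsilon>\<close> by (smt (verit) mult_nonpos_nonneg)
  define Za where "Za = {p :: real \<times> real. snd p \<in> {..w - A} \<and> fst p + snd p \<in> SI w}"
  define Zb where "Zb = {p :: real \<times> real. fst p \<in> UNIV \<and> w - A < snd p \<and> fst p + snd p \<in> SI w}"
  have sets: "Za \<in> sets (F \<Otimes>\<^sub>M G)" "Zb \<in> sets (F \<Otimes>\<^sub>M G)"
    unfolding sets_pair_real_distribution[OF F(1) real_distribution_G] Za_def Zb_def
    by (intro Collect_in_sets_pair_borel; measurable)+
  have "emeasure (F \<Otimes>\<^sub>M G) Za \<le> ennreal B * conv_part G {..w - A} w"
    unfolding Za_def using bound \<open>0 \<le> B\<close> by (intro emeasure_pair_sum_snd_le[OF F(1)]) auto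
  also have "\<dots> \<le> ennreal B * (ennreal ((1 + \<epsilon> / 4) * g w) + ennreal (\<epsilon> / 4 * g w))"
    using conv_part_le_split[of w A] conv_part_le[OF real_distribution_G AE_G_nonneg near] middle
    by (intro mult_left_mono) (auto intro: order_trans add_mono)
  also have "\<dots> = ennreal (B * (1 + \<epsilon> / 2) * g w)"
    using \<open>0 \<le> B\<close> \<open>0 < \<epsilon>\<close> g_nonneg[of w]
    by (simp del: ennreal_plus add: ennreal_plus[symmetric] ennreal_mult[symmetric] algebra_simps)
  finally have a: "emeasure (F \<Otimes>\<^sub>M G) Za \<le> ennreal (B * (1 + \<epsilon> / 2) * g w)" .
  have b: "emeasure (F \<Otimes>\<^sub>M G) Zb \<le> ennreal ((1 + \<epsilon> / 4) * g w)"
    using emeasure_pair_far_le[OF F _ \<open>0 \<le> A\<close> near, of UNIV]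
    by (simp add: Zb_def F.emeasure_space_1[unfolded F.space_eq_univ])
  have "emeasure (F \<star> G) (SI w) = emeasure (F \<Otimes>\<^sub>M G) (Za \<union> Zb)"
    unfolding emeasure_convolution_shift_int[OF F(1)] Za_def Zb_def
    by (rule arg_cong[where f = "emeasure (F \<Otimes>\<^sub>M G)"]) auto
  also have "\<dots> = emeasure (F \<Otimes>\<^sub>M G) Za + emeasure (F \<Otimes>\<^sub>M G) Zb"
    using sets by (intro plus_emeasure[symmetric]) (auto simp: Za_def Zb_def)
  also have "\<dots> \<le> ennreal (B * (1 + \<epsilon> / 2) * g w) + ennreal ((1 + \<epsilon> / 4) * g w)"
    using a b by (rule add_mono)
  also have "\<dots> = ennreal ((B * (1 + \<epsilon> / 2) + (1 + \<epsilon> / 4)) * g w)"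
    using \<open>0 \<le> B\<close> \<open>0 < \<epsilon>\<close> g_nonneg[of w]
    by (simp del: ennreal_plus add: ennreal_plus[symmetric] algebra_simps)
  also have "\<dots> \<le> ennreal (B * (1 + \<epsilon>) * g w)"
    using \<open>3 \<le> B * \<epsilon>\<close> \<open>\<epsilon> \<le> 1\<close> g_nonneg[of w]
    by (intro ennreal_leI mult_right_mono) (auto simp: algebra_simps)
  finally show ?thesis .
qed

lemma kesten_bound_induct:
  fixes F :: "nat \<Rightarrow> real measure"
  assumes F: "\<And>m. real_distribution (F m)" "\<And>m. AE s in F m. 0 \<le> s"
    and F_0: "\<And>w. 0 \<le> w \<Longrightarrow> emeasure (F 0) (SI w) = 0"
    and F_Suc: "\<And>m. F (Suc m) = (F m \<star> G)"
    and "0 < \<epsilon>" "\<epsilon> \<le> 1" "0 \<le> A" "3 \<le> K * \<epsilon>"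
    and far: "\<And>w. W < w \<Longrightarrow> conv_part G {A<..w - A} w \<le> ennreal (\<epsilon> / 4 * g w)
      \<and> (\<forall>s\<in>{0..A}. g (w - s) \<le> (1 + \<epsilon> / 4) * g w)"
    and compact: "\<And>w. A \<le> w \<Longrightarrow> w \<le> W \<Longrightarrow> 1 \<le> K * g w"
  shows "A \<le> w \<Longrightarrow> emeasure (F m) (SI w) \<le> ennreal (K * (1 + \<epsilon>) ^ m * g w)"
proof (induction m arbitrary: w)
  case 0
  then show ?case using F_0 \<open>0 \<le> A\<close> by simp
next
  case (Suc m)
  interpret F: real_distribution "F (Suc m)" by (rule F)
  have "0 \<le> K" using \<open>0 < \<epsilon>\<close> \<open>3 \<le> K * \<epsilon>\<close> by (smt (verit) mult_nonpos_nonneg)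
  show ?case
  proof (cases "w \<le> W")
    case True
    have "1 \<le> K * g w" using compact Suc.prems True .
    also have "\<dots> = K * g w * 1" by simp
    also have "\<dots> \<le> K * g w * (1 + \<epsilon>) ^ Suc m"
      by (intro mult_left_mono one_le_power) (use \<open>0 \<le> K\<close> \<open>0 < \<epsilon>\<close> g_nonneg[of w] in auto)
    finally have "(1 :: ennreal) \<le> ennreal (K * (1 + \<epsilon>) ^ Suc m * g w)"
      by (simp add: ennreal_leI mult_ac)
    then show ?thesis using F.emeasure_le_1 by (rule order_trans[rotated])
  next
    case False
    have "K * 1 \<le> K * (1 + \<epsilon>) ^ m" using \<open>0 \<le> K\<close> \<open>0 < \<epsilon>\<close> by (intro mult_left_mono) simp_all
    then have "3 \<le> K * (1 + \<epsilon>) ^ m * \<epsilon>"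
      using \<open>3 \<le> K * \<epsilon>\<close> mult_right_mono[of K "K * (1 + \<epsilon>) ^ m" \<epsilon>] \<open>0 < \<epsilon>\<close> by simp
    then have "emeasure (F m \<star> G) (SI w) \<le> ennreal (K * (1 + \<epsilon>) ^ m * (1 + \<epsilon>) * g w)"
      using far[of w] False Suc.IH \<open>0 < \<epsilon>\<close>
      by (intro emeasure_convolution_le_step[OF F(1,2) \<open>0 \<le> A\<close> \<open>0 < \<epsilon>\<close> \<open>\<epsilon> \<le> 1\<close>]) auto
    then show ?thesis by (simp add: F_Suc mult_ac)
  qed
qed

lemma kesten_bound:
  fixes F :: "nat \<Rightarrow> real measure"
  assumes F: "\<And>m. real_distribution (F m)" "\<And>m. AE s in F m. 0 \<le> s"
    and F_0: "\<And>w. 0 \<le> w \<Longrightarrow> emeasure (F 0) (SI w) = 0"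
    and F_Suc: "\<And>m. F (Suc m) = (F m \<star> G)"
    and "0 < \<epsilon>" "\<epsilon> \<le> 1"
  shows "\<exists>A K. 0 \<le> A \<and> 0 \<le> K \<and>
    (\<forall>m w. A \<le> w \<longrightarrow> emeasure (F m) (SI w) \<le> ennreal (K * (1 + \<epsilon>) ^ m * g w))"
proof -
  have e: "0 < \<epsilon> / 4" using \<open>0 < \<epsilon>\<close> by simp
  obtain A\<^sub>1 where A\<^sub>1: "\<And>A. A\<^sub>1 \<le> A \<Longrightarrow> eventually (\<lambda>z. conv_part G {A<..z - A} z \<le> ennreal (\<epsilon> / 4 * g z)) at_top"
    using eventually_conv_part_middle_le[OF e] by blast
  obtain X where X: "\<And>A. X \<le> A \<Longrightarrow> \<forall>W. \<exists>c>0. \<forall>w\<in>{A..W}. c \<le> g w"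
    using eventually_g_bounded_below by (auto simp: eventually_at_top_linorder)
  define A where "A = max A\<^sub>1 (max X 0)"
  have A: "0 \<le> A" "A\<^sub>1 \<le> A" "X \<le> A" by (auto simp: A_def)
  have "eventually (\<lambda>z. conv_part G {A<..z - A} z \<le> ennreal (\<epsilon> / 4 * g z)
      \<and> (\<forall>s\<in>{-A..A}. \<bar>g (z - s) - g z\<bar> \<le> \<epsilon> / 4 * g z)) at_top"
    using A\<^sub>1[OF A(2)] eventually_g_ratio[OF e] by (rule eventually_conj)
  then obtain W where W: "\<And>z. W \<le> z \<Longrightarrow> conv_part G {A<..z - A} z \<le> ennreal (\<epsilon> / 4 * g z)
      \<and> (\<forall>s\<in>{-A..A}. \<bar>g (z - s) - g z\<bar> \<le> \<epsilon> / 4 * g z)"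
    by (auto simp: eventually_at_top_linorder)
  have far: "conv_part G {A<..w - A} w \<le> ennreal (\<epsilon> / 4 * g w)
      \<and> (\<forall>s\<in>{0..A}. g (w - s) \<le> (1 + \<epsilon> / 4) * g w)" if "W < w" for w
  proof
    from W[of w] that have Ww: "conv_part G {A<..w - A} w \<le> ennreal (\<epsilon> / 4 * g w)"
      "\<forall>s\<in>{-A..A}. \<bar>g (w - s) - g w\<bar> \<le> \<epsilon> / 4 * g w"
      by auto
    then show "conv_part G {A<..w - A} w \<le> ennreal (\<epsilon> / 4 * g w)" by simp
    show "\<forall>s\<in>{0..A}. g (w - s) \<le> (1 + \<epsilon> / 4) * g w"
    proof
      fix s assume "s \<in> {0..A}"
      then have "\<bar>g (w - s) - g w\<bar> \<le> \<epsilon> / 4 * g w" using Ww(2) by auto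
      then have "g (w - s) \<le> g w + \<epsilon> / 4 * g w" by linarith
      then show "g (w - s) \<le> (1 + \<epsilon> / 4) * g w" by (simp add: distrib_right)
    qed
  qed
  obtain c where c: "0 < c" "\<And>w. w \<in> {A..W} \<Longrightarrow> c \<le> g w"
    using X[OF A(3)] by blast
  define K where "K = max (3 / \<epsilon>) (1 / c)"
  have "3 / \<epsilon> \<le> K" "1 / c \<le> K" by (simp_all add: K_def)
  then have K: "3 \<le> K * \<epsilon>" "1 \<le> K * c" "0 \<le> K"
    using \<open>0 < \<epsilon>\<close> c(1) by (simp_all add: divide_le_eq order.trans[OF _ \<open>1 / c \<le> K\<close>])
  have compact: "1 \<le> K * g w" if "A \<le> w" "w \<le> W" for w
  proof -
    have "K * c \<le> K * g w" using K(3) c(2)[of w] that by (intro mult_left_mono) auto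
    then show ?thesis using K(2) by linarith
  qed
  show ?thesis
    using kesten_bound_induct[OF F F_0 F_Suc \<open>0 < \<epsilon>\<close> \<open>\<epsilon> \<le> 1\<close> A(1) K(1) far compact] A(1) K(3)
    by blast
qed

subsection \<open>Overshoot of a single step\<close>

text \<open>\<open>(S\<^sub>m, \<zeta>\<^sub>m\<^sub>+\<^sub>1) \<in> overshoot_pairs x y\<close> means that the walk has not passed \<open>x\<close> before
  the step and passes it at that step with overshoot in \<open>y + \<Delta>\<close>.\<close>
definition overshoot_pairs :: "real \<Rightarrow> real \<Rightarrow> (real \<times> real) set" where
  "overshoot_pairs x y = {p. fst p \<le> x \<and> fst p + snd p \<in> SI (x + y)}"

lemma overshoot_pairs_sets: "overshoot_pairs x y \<in> sets (borel \<Otimes>\<^sub>M borel)"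
  unfolding overshoot_pairs_def by (intro Collect_in_sets_pair_borel) measurable

lemma emeasure_overshoot_pairs_ge:
  assumes "real_distribution F" "B \<le> x" "\<forall>s\<in>{0..B}. c \<le> g (x + y - s)"
  shows "ennreal c * emeasure F {0..B} \<le> emeasure (F \<Otimes>\<^sub>M G) (overshoot_pairs x y)"
proof -
  have "ennreal c * emeasure F {0..B} \<le> conv_part F {0..B} (x + y)"
    using assms(3) by (intro conv_part_ge[OF assms(1)]) auto
  also have "\<dots> = emeasure (F \<Otimes>\<^sub>M G) {p. fst p \<in> {0..B} \<and> fst p + snd p \<in> SI (x + y)}"
    by (rule emeasure_pair_sum_fst[OF assms(1), symmetric]) simp
  also have "\<dots> \<le> emeasure (F \<Otimes>\<^sub>M G) (overshoot_pairs x y)"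
    using assms(2) overshoot_pairs_sets sets_pair_real_distribution[OF assms(1) real_distribution_G]
    by (intro emeasure_mono) (auto simp: overshoot_pairs_def)
  finally show ?thesis .
qed

lemma emeasure_overshoot_pairs_le:
  assumes F: "real_distribution F" "AE s in F. 0 \<le> s"
    and "0 \<le> A" "0 \<le> K" "A \<le> y"
    and bound: "\<forall>t\<in>{A<..x + y - A}. emeasure F (SI (x + y - t)) \<le> ennreal (K * g (x + y - t))"
    and near: "\<forall>s\<in>{0..max A B}. g (x + y - s) \<le> c"
  shows "emeasure (F \<Otimes>\<^sub>M G) (overshoot_pairs x y)
    \<le> ennreal c + ennreal K * conv_part G {A<..x + y - A} (x + y) + ennreal c * emeasure F {B<..}"
proof -
  define z where "z = x + y"
  define E where "E = {p :: real \<times> real. fst p \<in> {..B} \<and> fst p + snd p \<in> SI z}"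
  define R1 where "R1 = {p :: real \<times> real. snd p \<in> {A<..z - A} \<and> fst p + snd p \<in> SI z}"
  define R where "R = {p :: real \<times> real. fst p \<in> {B<..} \<and> z - A < snd p \<and> fst p + snd p \<in> SI z}"
  have sets_FG: "sets (F \<Otimes>\<^sub>M G) = sets (borel \<Otimes>\<^sub>M borel)"
    by (rule sets_pair_real_distribution[OF F(1) real_distribution_G])
  have sets: "E \<in> sets (F \<Otimes>\<^sub>M G)" "R1 \<in> sets (F \<Otimes>\<^sub>M G)" "R \<in> sets (F \<Otimes>\<^sub>M G)"
    unfolding sets_FG E_def R1_def R_def by (intro Collect_in_sets_pair_borel; measurable)+
  have "overshoot_pairs x y \<subseteq> E \<union> R1 \<union> R"
  proof
    fix p assume p: "p \<in> overshoot_pairs x y"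
    then have "z < fst p + snd p" "fst p \<le> x"
      using less_of_mem_shift_int by (auto simp: overshoot_pairs_def z_def)
    then have "A < snd p" using \<open>A \<le> y\<close> by (simp add: z_def)
    then show "p \<in> E \<union> R1 \<union> R"
      using p by (auto simp: overshoot_pairs_def E_def R1_def R_def z_def)
  qed
  then have "emeasure (F \<Otimes>\<^sub>M G) (overshoot_pairs x y) \<le> emeasure (F \<Otimes>\<^sub>M G) (E \<union> R1 \<union> R)"
    using sets by (intro emeasure_mono) auto
  also have "\<dots> \<le> emeasure (F \<Otimes>\<^sub>M G) E + emeasure (F \<Otimes>\<^sub>M G) R1 + emeasure (F \<Otimes>\<^sub>M G) R"
    using sets by (intro order_trans[OF emeasure_subadditive] add_right_mono emeasure_subadditive) auto
  also have "\<dots> \<le> ennreal c + ennreal K * conv_part G {A<..z - A} z + ennreal c * emeasure F {B<..}"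
  proof (intro add_mono)
    show "emeasure (F \<Otimes>\<^sub>M G) E \<le> ennreal c"
      unfolding E_def emeasure_pair_sum_fst[OF F(1) atMost_borel]
      using near by (intro conv_part_le[OF F]) (auto simp: z_def)
    show "emeasure (F \<Otimes>\<^sub>M G) R1 \<le> ennreal K * conv_part G {A<..z - A} z"
      unfolding R1_def using bound \<open>0 \<le> K\<close> by (intro emeasure_pair_sum_snd_le[OF F(1)]) (auto simp: z_def)
    show "emeasure (F \<Otimes>\<^sub>M G) R \<le> ennreal c * emeasure F {B<..}"
      unfolding R_def using near \<open>0 \<le> A\<close> by (intro emeasure_pair_far_le[OF F]) (auto simp: z_def)
  qed
  finally show ?thesis by (simp add: z_def)
qed

lemma measure_overshoot_pairs_le:
  assumes F: "real_distribution F" "AE s in F. 0 \<le> s"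
    and "0 \<le> A" "0 \<le> K" "A \<le> y" "0 \<le> c" "0 \<le> d"
    and bound: "\<forall>t\<in>{A<..x + y - A}. emeasure F (SI (x + y - t)) \<le> ennreal (K * g (x + y - t))"
    and near: "\<forall>s\<in>{0..max A B}. g (x + y - s) \<le> c"
    and middle: "conv_part G {A<..x + y - A} (x + y) \<le> ennreal d"
  shows "measure (F \<Otimes>\<^sub>M G) (overshoot_pairs x y) \<le> c + K * d + c * measure F {B<..}"
proof -
  interpret F: real_distribution F by fact
  interpret FG: prob_space "F \<Otimes>\<^sub>M G"
    by (intro prob_space_pair F.prob_space_axioms G.prob_space_axioms)
  have "emeasure (F \<Otimes>\<^sub>M G) (overshoot_pairs x y)
      \<le> ennreal c + ennreal K * ennreal d + ennreal c * ennreal (measure F {B<..})"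
    using emeasure_overshoot_pairs_le[OF F \<open>0 \<le> A\<close> \<open>0 \<le> K\<close> \<open>A \<le> y\<close> bound near] middle
    by (elim order_trans) (intro add_mono mult_left_mono; simp add: F.emeasure_eq_measure)
  also have "\<dots> = ennreal (c + K * d + c * measure F {B<..})"
    using assms(3-7) by (simp del: ennreal_plus add: ennreal_plus[symmetric] ennreal_mult[symmetric])
  finally show ?thesis
    using assms(3-7) by (simp del: ennreal_plus add: FG.emeasure_eq_measure)
qed

lemma eventually_g_sum_pos: "eventually (\<lambda>(x, y). 0 < g (x + y)) (at_top \<times>\<^sub>F at_top)"
proof -
  obtain X where "\<And>z. X \<le> z \<Longrightarrow> 0 < g z"
    using eventually_g_pos by (auto simp: eventually_at_top_linorder)
  then show ?thesis
    by (intro eventually_prod_at_top_at_topI[of X 0]) auto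
qed

lemma eventually_overshoot_pairs_ge:
  assumes F: "real_distribution F" "AE s in F. 0 \<le> s" and "0 < \<epsilon>"
  shows "eventually (\<lambda>(x, y). (1 - \<epsilon>) * g (x + y) \<le> measure (F \<Otimes>\<^sub>M G) (overshoot_pairs x y))
    (at_top \<times>\<^sub>F at_top)"
proof -
  interpret F: real_distribution F by fact
  interpret FG: prob_space "F \<Otimes>\<^sub>M G"
    by (intro prob_space_pair F.prob_space_axioms G.prob_space_axioms)
  define e where "e = min \<epsilon> 1 / 2"
  have e: "0 < e" "e \<le> 1/2" "2 * e \<le> \<epsilon>" using \<open>0 < \<epsilon>\<close> by (auto simp: e_def)
  have "eventually (\<lambda>B. measure F {B<..} < e) at_top"
    using F.tendsto_measure_greaterThan_at_top e(1) by (rule order_tendstoD)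
  then obtain B where B: "0 \<le> B" "measure F {B<..} < e"
    by (metis eventually_at_top_linorder max.cobounded1 max.cobounded2)
  then have FB: "1 - e \<le> measure F {0..B}"
    using F.measure_atLeastAtMost_eq[OF F(2) B(1)] by simp
  obtain Z where Z: "\<And>z. Z \<le> z \<Longrightarrow> \<forall>s\<in>{-B..B}. \<bar>g (z - s) - g z\<bar> \<le> e * g z"
    using eventually_g_ratio[OF e(1)] by (auto simp: eventually_at_top_linorder)
  show ?thesis
  proof (rule eventually_prod_at_top_at_topI[of "max B Z" 0])
    fix x y :: real assume x: "max B Z \<le> x" and y: "0 \<le> y"
    let ?z = "x + y"
    have near: "\<forall>s\<in>{0..B}. (1 - e) * g ?z \<le> g (?z - s)"
    proof
      fix s assume "s \<in> {0..B}"
      then have "\<bar>g (?z - s) - g ?z\<bar> \<le> e * g ?z" using Z[of ?z] x y by auto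
      then show "(1 - e) * g ?z \<le> g (?z - s)" by (simp add: algebra_simps abs_le_iff)
    qed
    have "(1 - e) * (1 - e) = 1 - 2 * e + e * e" by (simp add: algebra_simps)
    then have "1 - \<epsilon> \<le> (1 - e) * (1 - e)"
      using e(1,3) mult_nonneg_nonneg[of e e] by linarith
    then have "(1 - \<epsilon>) * g ?z \<le> ((1 - e) * (1 - e)) * g ?z"
      using g_nonneg[of ?z] by (rule mult_right_mono)
    also have "\<dots> = (1 - e) * g ?z * (1 - e)" by (simp add: mult_ac)
    also have "\<dots> \<le> (1 - e) * g ?z * measure F {0..B}"
      using FB e g_nonneg[of ?z] by (intro mult_left_mono) auto
    also have "\<dots> \<le> measure (F \<Otimes>\<^sub>M G) (overshoot_pairs x y)"
      using emeasure_overshoot_pairs_ge[OF F(1) _ near] x e g_nonneg[of ?z]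
      by (simp add: F.emeasure_eq_measure FG.emeasure_eq_measure ennreal_mult[symmetric])
    finally show "(\<lambda>(x, y). (1 - \<epsilon>) * g (x + y) \<le> measure (F \<Otimes>\<^sub>M G) (overshoot_pairs x y)) (x, y)"
      by simp
  qed
qed

lemma eventually_overshoot_pairs_le:
  assumes F: "real_distribution F" "AE s in F. 0 \<le> s"
    and "0 \<le> K" and bound: "\<forall>w\<ge>A\<^sub>0. emeasure F (SI w) \<le> ennreal (K * g w)" and "0 < \<epsilon>"
  shows "eventually (\<lambda>(x, y). measure (F \<Otimes>\<^sub>M G) (overshoot_pairs x y) \<le> (1 + \<epsilon>) * g (x + y))
    (at_top \<times>\<^sub>F at_top)"
proof -
  interpret F: real_distribution F by fact
  define e where "e = min \<epsilon> 1 / 4"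
  have e: "0 < e" "e \<le> 1/4" "4 * e \<le> \<epsilon>" using \<open>0 < \<epsilon>\<close> by (auto simp: e_def)
  define e' where "e' = e / (K + 1)"
  have e': "0 < e'" "K * e' \<le> e"
    using e \<open>0 \<le> K\<close> by (auto simp: e'_def field_simps)
  obtain A\<^sub>1 where A\<^sub>1: "0 \<le> A\<^sub>1"
    "\<And>A. A\<^sub>1 \<le> A \<Longrightarrow> eventually (\<lambda>z. conv_part G {A<..z - A} z \<le> ennreal (e' * g z)) at_top"
    using eventually_conv_part_middle_le[OF e'(1)] by blast
  define A where "A = max A\<^sub>0 A\<^sub>1"
  have A: "0 \<le> A" "A\<^sub>0 \<le> A" "A\<^sub>1 \<le> A" using A\<^sub>1(1) by (auto simp: A_def)
  have "eventually (\<lambda>B. measure F {B<..} < e) at_top"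
    using F.tendsto_measure_greaterThan_at_top e(1) by (rule order_tendstoD)
  then obtain B where B: "0 \<le> B" "measure F {B<..} < e"
    by (metis eventually_at_top_linorder max.cobounded1 max.cobounded2)
  have "eventually (\<lambda>z. (\<forall>s\<in>{- max A B..max A B}. \<bar>g (z - s) - g z\<bar> \<le> e * g z)
      \<and> conv_part G {A<..z - A} z \<le> ennreal (e' * g z)) at_top"
    using eventually_g_ratio[OF e(1)] A\<^sub>1(2)[OF A(3)] by (rule eventually_conj)
  then obtain Z where Z: "\<And>z. Z \<le> z \<Longrightarrow> (\<forall>s\<in>{- max A B..max A B}. \<bar>g (z - s) - g z\<bar> \<le> e * g z)
      \<and> conv_part G {A<..z - A} z \<le> ennreal (e' * g z)"
    by (auto simp: eventually_at_top_linorder)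
  show ?thesis
  proof (rule eventually_prod_at_top_at_topI[of Z A])
    fix x y :: real assume x: "Z \<le> x" and y: "A \<le> y"
    let ?z = "x + y"
    have Zz: "\<forall>s\<in>{- max A B..max A B}. \<bar>g (?z - s) - g ?z\<bar> \<le> e * g ?z"
      "conv_part G {A<..?z - A} ?z \<le> ennreal (e' * g ?z)"
      using Z[of ?z] x y A(1) by auto
    have near: "\<forall>s\<in>{0..max A B}. g (?z - s) \<le> (1 + e) * g ?z"
    proof
      fix s assume "s \<in> {0..max A B}"
      then have "\<bar>g (?z - s) - g ?z\<bar> \<le> e * g ?z" using Zz(1) by auto
      then show "g (?z - s) \<le> (1 + e) * g ?z" by (simp add: algebra_simps abs_le_iff)
    qed
    have bound': "\<forall>t\<in>{A<..?z - A}. emeasure F (SI (?z - t)) \<le> ennreal (K * g (?z - t))"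
      using bound A(2) by auto
    have "measure (F \<Otimes>\<^sub>M G) (overshoot_pairs x y)
        \<le> (1 + e) * g ?z + K * (e' * g ?z) + (1 + e) * g ?z * measure F {B<..}"
      using e e' g_nonneg[of ?z]
      by (intro measure_overshoot_pairs_le[OF F A(1) \<open>0 \<le> K\<close> y _ _ bound' near Zz(2)]) simp_all
    also have "\<dots> \<le> (1 + e) * g ?z + e * g ?z + (1 + e) * g ?z * e"
      using e e'(2) B(2) g_nonneg[of ?z]
      by (intro add_mono mult_left_mono) (auto simp: mult.assoc[symmetric] intro: mult_right_mono)
    also have "\<dots> = (1 + 3 * e + e * e) * g ?z"
      by (simp add: algebra_simps)
    also have "\<dots> \<le> (1 + \<epsilon>) * g ?z"
    proof (rule mult_right_mono)
      have "e * e \<le> 1/4 * e" using e by (intro mult_right_mono) auto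
      then show "1 + 3 * e + e * e \<le> 1 + \<epsilon>" using e by linarith
    qed (rule g_nonneg)
    finally show "(\<lambda>(x, y). measure (F \<Otimes>\<^sub>M G) (overshoot_pairs x y) \<le> (1 + \<epsilon>) * g (x + y)) (x, y)"
      by simp
  qed
qed

lemma tendsto_overshoot_pairs:
  assumes "real_distribution F" "AE s in F. 0 \<le> s"
    and "0 \<le> K" "\<forall>w\<ge>A\<^sub>0. emeasure F (SI w) \<le> ennreal (K * g w)"
  shows "((\<lambda>(x, y). measure (F \<Otimes>\<^sub>M G) (overshoot_pairs x y) / g (x + y)) \<longlongrightarrow> 1) (at_top \<times>\<^sub>F at_top)"
proof (rule tendstoI)
  fix \<eta> :: real assume "0 < \<eta>"
  then have "0 < \<eta> / 2" by simp
  from eventually_g_sum_pos eventually_overshoot_pairs_ge[OF assms(1,2) this]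
    eventually_overshoot_pairs_le[OF assms this]
  show "eventually (\<lambda>p. dist ((\<lambda>(x, y). measure (F \<Otimes>\<^sub>M G) (overshoot_pairs x y) / g (x + y)) p) 1 < \<eta>)
    (at_top \<times>\<^sub>F at_top)"
  proof eventually_elim
    case (elim p)
    obtain x y where p: "p = (x, y)" by (cases p)
    let ?m = "measure (F \<Otimes>\<^sub>M G) (overshoot_pairs x y)" and ?g = "g (x + y)"
    from elim p have g: "0 < ?g" and lo: "(1 - \<eta> / 2) * ?g \<le> ?m" and hi: "?m \<le> (1 + \<eta> / 2) * ?g"
      by auto
    have "?g - \<eta> / 2 * ?g \<le> ?m" "?m \<le> ?g + \<eta> / 2 * ?g"
      using lo hi by (simp_all add: algebra_simps)
    then have close: "\<bar>?m - ?g\<bar> \<le> \<eta> / 2 * ?g"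
      by (intro abs_leI) linarith+
    have "?m / ?g - 1 = (?m - ?g) / ?g" using g by (simp add: field_simps)
    then have "dist (?m / ?g) 1 = \<bar>?m - ?g\<bar> / ?g" using g by (simp add: dist_real_def abs_divide)
    also have "\<dots> \<le> \<eta> / 2" using close g by (simp add: pos_divide_le_eq)
    also have "\<dots> < \<eta>" using \<open>0 < \<eta>\<close> by simp
    finally show ?case by (simp add: p)
  qed
qed

lemma emeasure_overshoot_pairs_le_convolution:
  assumes "real_distribution F"
  shows "emeasure (F \<Otimes>\<^sub>M G) (overshoot_pairs x y) \<le> emeasure (F \<star> G) (SI (x + y))"
proof -
  have "{p. fst p + snd p \<in> SI (x + y)} \<in> sets (F \<Otimes>\<^sub>M G)"
    unfolding sets_pair_real_distribution[OF assms real_distribution_G]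
    by (intro Collect_in_sets_pair_borel) measurable
  then show ?thesis
    unfolding emeasure_convolution_shift_int[OF assms]
    by (rule emeasure_mono[rotated]) (auto simp: overshoot_pairs_def)
qed

end

section \<open>The random walk stopped at \<open>\<tau>\<close>\<close>

locale Delta_walk = Delta_subexponential T G for T G +
  fixes M :: "'a measure" and \<zeta> :: "nat \<Rightarrow> 'a \<Rightarrow> real" and \<tau> :: "'a \<Rightarrow> nat"
  assumes prob_space_M: "prob_space M"
    and \<zeta>_measurable [measurable]: "\<And>i. \<zeta> i \<in> borel_measurable M"
    and \<zeta>_nonneg: "\<And>i \<omega>. 0 \<le> \<zeta> i \<omega>"
    and \<zeta>_indep: "prob_space.indep_vars M (\<lambda>_. borel) \<zeta> UNIV"
    and \<zeta>_distr: "\<And>i. distr M borel (\<zeta> i) = G"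
    and \<tau>_measurable [measurable]: "\<tau> \<in> measurable M (count_space UNIV)"
    and \<tau>_indep: "prob_space.indep_vars M (\<lambda>_. borel)
      (\<lambda>j \<omega>. case j of None \<Rightarrow> real (\<tau> \<omega>) | Some i \<Rightarrow> \<zeta> i \<omega>) UNIV"
begin

sublocale M: prob_space M
  by (rule prob_space_M)

abbreviation S :: "nat \<Rightarrow> 'a \<Rightarrow> real" where "S \<equiv> psum \<zeta>"

lemma psum_measurable [measurable]: "S m \<in> borel_measurable M"
  unfolding psum_def by measurable

lemma psum_0: "S 0 \<omega> = 0"
  by (simp add: psum_def)

lemma psum_Suc: "S (Suc m) \<omega> = S m \<omega> + \<zeta> m \<omega>"
  by (simp add: psum_def)

lemma psum_mono: "m \<le> n \<Longrightarrow> S m \<omega> \<le> S n \<omega>"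
  unfolding psum_def by (rule sum_mono2) (auto simp: \<zeta>_nonneg)

lemma indep_psum_step: "M.indep_var borel (S m) borel (\<zeta> m)"
proof -
  have "M.indep_var (PiM {..<m} (\<lambda>_. borel)) (\<lambda>\<omega>. restrict (\<lambda>i. \<zeta> i \<omega>) {..<m})
      (PiM {m} (\<lambda>_. borel)) (\<lambda>\<omega>. restrict (\<lambda>i. \<zeta> i \<omega>) {m})"
    by (rule M.indep_var_restrict[OF \<zeta>_indep]) auto
  then have "M.indep_var borel ((\<lambda>f. \<Sum>i<m. f i) \<circ> (\<lambda>\<omega>. restrict (\<lambda>i. \<zeta> i \<omega>) {..<m}))
      borel ((\<lambda>f. f m) \<circ> (\<lambda>\<omega>. restrict (\<lambda>i. \<zeta> i \<omega>) {m}))"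
    by (rule M.indep_var_compose)
      (auto intro!: borel_measurable_sum measurable_component_singleton)
  moreover have "(\<lambda>f. \<Sum>i<m. f i) \<circ> (\<lambda>\<omega>. restrict (\<lambda>i. \<zeta> i \<omega>) {..<m}) = S m"
    by (auto simp: psum_def fun_eq_iff)
  moreover have "(\<lambda>f. f m) \<circ> (\<lambda>\<omega>. restrict (\<lambda>i. \<zeta> i \<omega>) {m}) = \<zeta> m"
    by (auto simp: fun_eq_iff)
  ultimately show ?thesis by simp
qed

text \<open>\<open>indep_var\<close> needs both variables in the same space, hence the dummy second coordinate.\<close>
lemma indep_tau_psum_step:
  "M.indep_var (borel \<Otimes>\<^sub>M borel) (\<lambda>\<omega>. (real (\<tau> \<omega>), 0 :: real))
     (borel \<Otimes>\<^sub>M borel) (\<lambda>\<omega>. (S m \<omega>, \<zeta> m \<omega>))"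
proof -
  let ?X = "\<lambda>j \<omega>. case j of None \<Rightarrow> real (\<tau> \<omega>) | Some i \<Rightarrow> \<zeta> i \<omega>"
  have "M.indep_var (PiM {None} (\<lambda>_. borel)) (\<lambda>\<omega>. restrict (\<lambda>i. ?X i \<omega>) {None})
      (PiM (Some ` {..m}) (\<lambda>_. borel)) (\<lambda>\<omega>. restrict (\<lambda>i. ?X i \<omega>) (Some ` {..m}))"
    by (rule M.indep_var_restrict[OF \<tau>_indep]) auto
  then have "M.indep_var (borel \<Otimes>\<^sub>M borel) ((\<lambda>f. (f None, 0 :: real)) \<circ> (\<lambda>\<omega>. restrict (\<lambda>i. ?X i \<omega>) {None}))
      (borel \<Otimes>\<^sub>M borel) ((\<lambda>f. (\<Sum>i<m. f (Some i), f (Some m))) \<circ> (\<lambda>\<omega>. restrict (\<lambda>i. ?X i \<omega>) (Some ` {..m})))"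
    by (rule M.indep_var_compose)
      (auto intro!: measurable_Pair borel_measurable_sum measurable_component_singleton)
  then show ?thesis
    by (simp add: psum_def comp_def)
qed

definition F :: "nat \<Rightarrow> real measure" where "F m = distr M borel (S m)"

lemma real_distribution_F: "real_distribution (F m)"
  by (simp add: F_def)

lemma AE_F_nonneg: "AE s in F m. 0 \<le> s"
  unfolding F_def by (subst AE_distr_iff) (auto simp: psum_def \<zeta>_nonneg intro!: sum_nonneg)

lemma emeasure_F_0:
  assumes "0 \<le> w"
  shows "emeasure (F 0) (SI w) = 0"
proof -
  have "S 0 -` SI w \<inter> space M = {}"
    using less_of_mem_shift_int[of 0 w T] assms by (auto simp: psum_0)
  then show ?thesis
    unfolding F_def by (subst emeasure_distr) auto
qed

lemma F_Suc: "F (Suc m) = (F m \<star> G)"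
proof -
  have "S (Suc m) = (\<lambda>\<omega>. S m \<omega> + \<zeta> m \<omega>)"
    by (simp add: psum_Suc fun_eq_iff)
  then show ?thesis
    using M.sum_indep_random_variable[OF indep_psum_step] by (simp add: F_def \<zeta>_distr)
qed

lemma distr_psum_step: "distr M (borel \<Otimes>\<^sub>M borel) (\<lambda>\<omega>. (S m \<omega>, \<zeta> m \<omega>)) = F m \<Otimes>\<^sub>M G"
  using indep_psum_step unfolding M.indep_var_distribution_eq by (simp add: F_def \<zeta>_distr)

lemma prob_tau_psum_step:
  assumes "E \<in> sets (borel \<Otimes>\<^sub>M borel)"
  shows "M.prob {\<omega> \<in> space M. m < \<tau> \<omega> \<and> (S m \<omega>, \<zeta> m \<omega>) \<in> E}
    = M.prob {\<omega> \<in> space M. m < \<tau> \<omega>} * measure (F m \<Otimes>\<^sub>M G) E"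
proof -
  have tail: "{real m<..} \<times> UNIV \<in> sets (borel \<Otimes>\<^sub>M (borel :: real measure))"
    by (intro pair_measureI) auto
  have "M.prob {\<omega> \<in> space M. m < \<tau> \<omega> \<and> (S m \<omega>, \<zeta> m \<omega>) \<in> E}
      = M.prob ((\<lambda>\<omega>. ((real (\<tau> \<omega>), 0 :: real), (S m \<omega>, \<zeta> m \<omega>))) -` (({real m<..} \<times> UNIV) \<times> E)
          \<inter> space M)"
    by (rule arg_cong[where f = M.prob]) auto
  also have "\<dots> = M.prob ((\<lambda>\<omega>. (real (\<tau> \<omega>), 0 :: real)) -` ({real m<..} \<times> UNIV) \<inter> space M)
      * M.prob ((\<lambda>\<omega>. (S m \<omega>, \<zeta> m \<omega>)) -` E \<inter> space M)"
    by (rule M.indep_varD[OF indep_tau_psum_step tail assms])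
  also have "M.prob ((\<lambda>\<omega>. (S m \<omega>, \<zeta> m \<omega>)) -` E \<inter> space M) = measure (F m \<Otimes>\<^sub>M G) E"
    using assms by (simp add: distr_psum_step[symmetric] measure_distr)
  also have "M.prob ((\<lambda>\<omega>. (real (\<tau> \<omega>), 0 :: real)) -` ({real m<..} \<times> UNIV) \<inter> space M)
      = M.prob {\<omega> \<in> space M. m < \<tau> \<omega>}"
    by (rule arg_cong[where f = M.prob]) auto
  finally show ?thesis .
qed

definition overshoot_event :: "real \<Rightarrow> real \<Rightarrow> 'a set" where
  "overshoot_event x y = {\<omega> \<in> space M. (\<exists>n. 1 \<le> n \<and> x < S n \<omega>) \<and>
     first_passage \<zeta> x \<omega> \<le> \<tau> \<omega> \<and> overshoot \<zeta> x \<omega> \<in> SI y}"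

definition step_event :: "real \<Rightarrow> real \<Rightarrow> nat \<Rightarrow> 'a set" where
  "step_event x y m = {\<omega> \<in> space M. m < \<tau> \<omega> \<and> (S m \<omega>, \<zeta> m \<omega>) \<in> overshoot_pairs x y}"

lemma first_passage_eq_Suc:
  assumes "S m \<omega> \<le> x" "x < S (Suc m) \<omega>"
  shows "first_passage \<zeta> x \<omega> = Suc m"
  unfolding first_passage_def
proof (rule Least_equality)
  show "1 \<le> Suc m \<and> x < S (Suc m) \<omega>" using assms(2) by simp
  fix n assume n: "1 \<le> n \<and> x < S n \<omega>"
  show "Suc m \<le> n"
  proof (rule ccontr)
    assume "\<not> Suc m \<le> n"
    then have "S n \<omega> \<le> S m \<omega>" by (intro psum_mono) auto
    then show False using n assms(1) by linarith
  qed
qed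

lemma overshoot_event_eq_UN:
  assumes "0 \<le> x" "0 \<le> y"
  shows "overshoot_event x y = (\<Union>m. step_event x y m)"
proof (intro set_eqI iffI)
  fix \<omega> assume \<omega>: "\<omega> \<in> overshoot_event x y"
  then have "\<exists>n. 1 \<le> n \<and> x < S n \<omega>" by (simp add: overshoot_event_def)
  then have n: "1 \<le> first_passage \<zeta> x \<omega> \<and> x < S (first_passage \<zeta> x \<omega>) \<omega>"
    unfolding first_passage_def by (rule LeastI_ex)
  then obtain m where m: "first_passage \<zeta> x \<omega> = Suc m" by (cases "first_passage \<zeta> x \<omega>") auto
  have "S m \<omega> \<le> x"
  proof (cases m)
    case 0
    then show ?thesis using assms(1) by (simp add: psum_0)
  next
    case (Suc k)
    then show ?thesis
      using not_less_Least[of m "\<lambda>n. 1 \<le> n \<and> x < S n \<omega>"] m unfolding first_passage_def by auto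
  qed
  moreover have "S m \<omega> + \<zeta> m \<omega> \<in> SI (x + y)"
    using \<omega> m by (simp add: overshoot_event_def overshoot_def diff_mem_shift_int_iff psum_Suc)
  ultimately have "\<omega> \<in> step_event x y m"
    using \<omega> m by (simp add: overshoot_event_def step_event_def overshoot_pairs_def)
  then show "\<omega> \<in> (\<Union>m. step_event x y m)" by blast
next
  fix \<omega> assume "\<omega> \<in> (\<Union>m. step_event x y m)"
  then obtain m where \<omega>: "\<omega> \<in> space M" "m < \<tau> \<omega>" "S m \<omega> \<le> x" "S (Suc m) \<omega> \<in> SI (x + y)"
    by (auto simp: step_event_def overshoot_pairs_def psum_Suc)
  have "x < S (Suc m) \<omega>"
    using less_of_mem_shift_int[OF \<omega>(4)] assms(2) by linarith
  then have "first_passage \<zeta> x \<omega> = Suc m"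
    using \<omega>(3) by (rule first_passage_eq_Suc[rotated])
  then show "\<omega> \<in> overshoot_event x y"
    using \<omega> \<open>x < S (Suc m) \<omega>\<close> by (auto simp: overshoot_event_def overshoot_def diff_mem_shift_int_iff)
qed

lemma disjoint_family_step_event:
  assumes "0 \<le> y"
  shows "disjoint_family (step_event x y)"
proof -
  have crossing: "S m \<omega> \<le> x \<and> x < S (Suc m) \<omega>" if "\<omega> \<in> step_event x y m" for m \<omega>
    using that less_of_mem_shift_int[of "S (Suc m) \<omega>" "x + y" T] assms
    by (auto simp: step_event_def overshoot_pairs_def psum_Suc)
  have False if "\<omega> \<in> step_event x y m" "\<omega> \<in> step_event x y n" "m < n" for \<omega> m n
    using crossing[OF that(1)] crossing[OF that(2)] psum_mono[of "Suc m" n \<omega>] that(3) by simp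
  then show ?thesis
    unfolding disjoint_family_on_def by (metis disjoint_iff linorder_neqE_nat)
qed

lemma sums_prob_overshoot_event:
  assumes "0 \<le> x" "0 \<le> y"
  shows "(\<lambda>m. M.prob {\<omega> \<in> space M. m < \<tau> \<omega>} * measure (F m \<Otimes>\<^sub>M G) (overshoot_pairs x y))
    sums M.prob (overshoot_event x y)"
proof -
  have "step_event x y m \<in> sets M" for m
  proof -
    have "{\<omega> \<in> space M. m < \<tau> \<omega>} \<in> sets M" by measurable
    moreover have "(\<lambda>\<omega>. (S m \<omega>, \<zeta> m \<omega>)) -` overshoot_pairs x y \<inter> space M \<in> sets M"
      by (rule measurable_sets[OF _ overshoot_pairs_sets]) measurable
    moreover have "step_event x y m
        = {\<omega> \<in> space M. m < \<tau> \<omega>} \<inter> ((\<lambda>\<omega>. (S m \<omega>, \<zeta> m \<omega>)) -` overshoot_pairs x y \<inter> space M)"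
      by (auto simp: step_event_def)
    ultimately show ?thesis by simp
  qed
  then have "(\<lambda>m. M.prob (step_event x y m)) sums M.prob (\<Union>m. step_event x y m)"
    using disjoint_family_step_event[OF assms(2)] by (intro M.finite_measure_UNION) auto
  then show ?thesis
    unfolding overshoot_event_eq_UN[OF assms] step_event_def
    by (simp add: prob_tau_psum_step[OF overshoot_pairs_sets])
qed

lemma overshoot_pairs_ratio_le:
  assumes kesten: "\<And>m w. A \<le> w \<Longrightarrow> emeasure (F m) (SI w) \<le> ennreal (C * q ^ m * g w)"
    and "0 \<le> C" "0 \<le> q" "A \<le> x + y" "0 < g (x + y)"
  shows "measure (F m \<Otimes>\<^sub>M G) (overshoot_pairs x y) / g (x + y) \<le> C * q ^ Suc m"
proof -
  interpret FG: prob_space "F m \<Otimes>\<^sub>M G"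
    by (intro prob_space_pair real_distribution.axioms(1)[OF real_distribution_F] G.prob_space_axioms)
  have "emeasure (F m \<Otimes>\<^sub>M G) (overshoot_pairs x y) \<le> emeasure (F (Suc m)) (SI (x + y))"
    unfolding F_Suc by (rule emeasure_overshoot_pairs_le_convolution[OF real_distribution_F])
  also have "\<dots> \<le> ennreal (C * q ^ Suc m * g (x + y))"
    using \<open>A \<le> x + y\<close> by (rule kesten)
  finally show ?thesis
    using assms(2-5) by (simp add: FG.emeasure_eq_measure divide_le_eq)
qed

lemma tendsto_prob_overshoot_event:
  fixes r :: real
  assumes "1 < r" "integrable M (\<lambda>\<omega>. r ^ \<tau> \<omega>)"
  shows "((\<lambda>(x, y). M.prob (overshoot_event x y) / g (x + y))
    \<longlongrightarrow> M.expectation (\<lambda>\<omega>. real (\<tau> \<omega>))) (at_top \<times>\<^sub>F at_top)"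
proof -
  define p where "p m = M.prob {\<omega> \<in> space M. m < \<tau> \<omega>}" for m
  define \<epsilon> where "\<epsilon> = min ((r - 1) / 2) 1"
  have \<epsilon>: "0 < \<epsilon>" "\<epsilon> \<le> 1" "1 + \<epsilon> < r" using assms(1) by (auto simp: \<epsilon>_def min_def field_simps)
  obtain A K where AK: "0 \<le> A" "0 \<le> K"
    "\<And>m w. A \<le> w \<Longrightarrow> emeasure (F m) (SI w) \<le> ennreal (K * (1 + \<epsilon>) ^ m * g w)"
    using kesten_bound[OF real_distribution_F AE_F_nonneg emeasure_F_0 F_Suc \<epsilon>(1,2)] by blast
  define a where "a m = (\<lambda>(x, y). p m * measure (F m \<Otimes>\<^sub>M G) (overshoot_pairs x y) / g (x + y))" for m
  have "((\<lambda>n. a m n) \<longlongrightarrow> p m * 1) (at_top \<times>\<^sub>F at_top)" for m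
    using tendsto_mult_left[OF tendsto_overshoot_pairs[OF real_distribution_F AE_F_nonneg _ allI[OF impI[OF AK(3)]]]]
      AK(2) \<epsilon>(1) by (simp add: a_def case_prod_beta mult.assoc)
  moreover have "eventually (\<lambda>(m, n). norm (a m n) \<le> p m * (K * (1 + \<epsilon>) ^ Suc m))
    (at_top \<times>\<^sub>F (at_top \<times>\<^sub>F at_top))"
  proof -
    obtain X where X: "\<And>z. X \<le> z \<Longrightarrow> 0 < g z"
      using eventually_g_pos by (auto simp: eventually_at_top_linorder)
    have "eventually (\<lambda>n. \<forall>m. norm (a m n) \<le> p m * (K * (1 + \<epsilon>) ^ Suc m)) (at_top \<times>\<^sub>F at_top)"
    proof (rule eventually_prod_at_top_at_topI[of "max A X" 0])
      fix x y :: real assume xy: "max A X \<le> x" "0 \<le> y"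
      show "\<forall>m. norm (a m (x, y)) \<le> p m * (K * (1 + \<epsilon>) ^ Suc m)"
      proof
        fix m
        have gz: "0 < g (x + y)" using X xy by simp
        have "p m * (measure (F m \<Otimes>\<^sub>M G) (overshoot_pairs x y) / g (x + y))
            \<le> p m * (K * (1 + \<epsilon>) ^ Suc m)"
          using overshoot_pairs_ratio_le[OF AK(3) AK(2) _ _ gz] xy \<epsilon>(1)
          by (intro mult_left_mono) (simp_all add: p_def)
        then show "norm (a m (x, y)) \<le> p m * (K * (1 + \<epsilon>) ^ Suc m)"
          using gz by (simp add: a_def p_def)
      qed
    qed
    then have "eventually (\<lambda>q. True \<and> (\<forall>m. norm (a m (snd q)) \<le> p m * (K * (1 + \<epsilon>) ^ Suc m)))
        (at_top \<times>\<^sub>F (at_top \<times>\<^sub>F at_top))"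
      by (intro eventually_prodI) auto
    then show ?thesis by eventually_elim auto
  qed
  moreover have "summable (\<lambda>m. p m * (K * (1 + \<epsilon>) ^ Suc m))"
    using M.summable_prob_less_mult_power[OF \<tau>_measurable _ assms(2), of "1 + \<epsilon>"] assms(1) \<epsilon>
    by (simp add: p_def power_Suc mult_ac summable_mult)
  ultimately have "((\<lambda>n. \<Sum>m. a m n) \<longlongrightarrow> (\<Sum>m. p m * 1)) (at_top \<times>\<^sub>F at_top)"
    by (intro conjunct2[OF conjunct2[OF tannerys_theorem]]) (simp_all add: prod_filter_eq_bot)
  moreover have "eventually (\<lambda>n. (\<Sum>m. a m n) = (\<lambda>(x, y). M.prob (overshoot_event x y) / g (x + y)) n)
    (at_top \<times>\<^sub>F at_top)"
    by (rule eventually_prod_at_top_at_topI[of 0 0])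
      (auto simp: a_def p_def sums_iff[THEN iffD1, OF sums_divide[OF sums_prob_overshoot_event]])
  moreover have "M.expectation (\<lambda>\<omega>. real (\<tau> \<omega>)) = (\<Sum>m. p m)"
    unfolding p_def
    using M.summable_prob_less_mult_power[OF \<tau>_measurable _ assms(2), of 1] assms(1)
    by (intro M.expectation_nat_eq_suminf_prob_less) simp_all
  ultimately show ?thesis
    using tendsto_cong by fastforce
qed

end

theorem corollary3:
  fixes M :: "'a measure" and T :: ereal and G :: "real measure"
    and \<zeta> :: "nat \<Rightarrow> 'a \<Rightarrow> real" and \<tau> :: "'a \<Rightarrow> nat" and \<delta> :: real
  assumes "prob_space M"
    and "0 < T"
    and "S_Delta T G"
    and "\<And>i. \<zeta> i \<in> borel_measurable M"
    and "\<And>i \<omega>. 0 \<le> \<zeta> i \<omega>"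
    and "prob_space.indep_vars M (\<lambda>_. borel) \<zeta> UNIV"
    and "\<And>i. distr M borel (\<zeta> i) = G"
    and "\<tau> \<in> measurable M (count_space UNIV)"
    and "prob_space.indep_vars M (\<lambda>_. borel)
           (\<lambda>j \<omega>. case j of None \<Rightarrow> real (\<tau> \<omega>) | Some i \<Rightarrow> \<zeta> i \<omega>) UNIV"
    and "\<delta> > 0"
    and "integrable M (\<lambda>\<omega>. (1 + \<delta>) ^ \<tau> \<omega>)"
  shows "((\<lambda>(x, y). measure M {\<omega> \<in> space M.
              (\<exists>n. 1 \<le> n \<and> x < psum \<zeta> n \<omega>) \<and>
              first_passage \<zeta> x \<omega> \<le> \<tau> \<omega> \<and>
              overshoot \<zeta> x \<omega> \<in> shift_int y T}
            / measure G (shift_int (x + y) T))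
          \<longlongrightarrow> prob_space.expectation M (\<lambda>\<omega>. real (\<tau> \<omega>)))
         (at_top \<times>\<^sub>F at_top)"
proof -
  interpret Delta_walk T G M \<zeta> \<tau>
    by (intro Delta_walk.intro Delta_subexponential.intro Delta_walk_axioms.intro) (fact assms)+
  have "1 < 1 + \<delta>" using \<open>\<delta> > 0\<close> by simp
  from tendsto_prob_overshoot_event[OF this assms(11)] show ?thesis
    by (simp add: overshoot_event_def g_def)
qed

end
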